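(* Let $\lambda>0$ and $\alpha\in(0,1)$. Let $J$ and $N$ be the regular and singular solutions of $\varphi''+\frac{2}{r}\varphi'+\lambda\varphi=0$ on $(0,\infty)$, normalized so that $J(r)=r^{-1}\cos(\sqrt\lambda r-\zeta)+O(r^{-2})$ and $N(r)=r^{-1}\sin(\sqrt\lambda r-\zeta)+O(r^{-2})$ as $r\to+\infty$, where $\zeta\in\mathbb{R}$ is a constant depending on $\lambda$. Let $\rho$ be a smooth cutoff with $\rho(r)=1$ for $r>2$ and $\rho(r)=0$ for $r<1$. Let $$\eta(r)=\rho(r)r^{-2}\big[k_1\sin^2(\sqrt\lambda r-\zeta)+k_2\cos^2(\sqrt\lambda r-\zeta)+k_3\sin(\sqrt\lambda r-\zeta)\cos(\sqrt\lambda r-\zeta)\big]+\bar\eta(r),$$ where $k_1,k_2,k_3\in\mathbb{R}$ and $\|\bar\eta(r)(1+r)^3\|_{C^{0,\alpha}}+\sum_i|k_i|<C$. Then the equation $$h''+\frac{2}{r}h'+\lambda h=\eta$$ has a solution $h\in C^{0,\alpha}[0,+\infty)$ of the form $$h(r)=c_1r^{-1}\sin(\sqrt\lambda r-\zeta)+\bar h(r),\quad r>1,$$ where $|c_1|\le C'$ and $|\bar h(r)|\le C'(1+r)^{-2}$, with $C'$ depending only on $C$ and $\lambda$. *)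

theory Defs
  imports "HOL-Analysis.Analysis" "HOL-Library.Landau_Symbols"
begin

text \<open>Hoelder norm C^{0,alpha} on a set S of reals, valued in the extended reals
  (infinite iff the function is unbounded or not alpha-Hoelder on S):
  sup norm plus Hoelder seminorm.\<close>
definition holder_norm :: "real \<Rightarrow> real set \<Rightarrow> (real \<Rightarrow> real) \<Rightarrow> ereal" where
  "holder_norm \<alpha> S f =
     (SUP x\<in>S. ereal \<bar>f x\<bar>) +
     (SUP p\<in>{(x, y). x \<in> S \<and> y \<in> S \<and> x \<noteq> y}.
        ereal (\<bar>f (fst p) - f (snd p)\<bar> / \<bar>fst p - snd p\<bar> powr \<alpha>))"

definition solves_radial :: "real \<Rightarrow> (real \<Rightarrow> real) \<Rightarrow> (real \<Rightarrow> real) \<Rightarrow> bool" where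
  "solves_radial lam g \<phi> \<longleftrightarrow>
     (\<forall>r>0. (\<phi> has_real_derivative deriv \<phi> r) (at r) \<and>
            (deriv \<phi> has_real_derivative (g r - (2 / r) * deriv \<phi> r - lam * \<phi> r)) (at r))"

end

theory Submission
  imports Defs
begin

text \<open>
  Writing \<open>h = v / r\<close> turns the radial equation into \<open>v'' + \<lambda> v = r \<eta>\<close>. The slowly decaying
  part \<open>T(\<surd>\<lambda> r - \<zeta>) / r\<close> of \<open>r \<eta>\<close>, with \<open>T\<close> quadratic in sine and cosine, is matched by
  \<open>profile r \<cdot> S r\<close>: here \<open>S\<close> is a trigonometric polynomial in the double angle with
  \<open>S'' + \<lambda> S = T\<close>, which exists because the frequency \<open>2\<surd>\<lambda>\<close> is not resonant, and
  \<open>profile r = r\<^sup>3 / (1 + r\<^sup>2)\<^sup>2\<close> behaves like \<open>1/r\<close> at infinity. What is left is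
  \<open>O(1/(1 + r\<^sup>2))\<close>, hence integrable, and variation of constants with the constants fixed at
  infinity yields a bounded solution \<open>c cos(\<surd>\<lambda> r)/\<surd>\<lambda> + O(1/r)\<close> vanishing at \<open>0\<close>.
  Regularity of \<open>J\<close> at the origin together with its asymptotics forces \<open>cos \<zeta> = 0\<close>, so
  \<open>cos(\<surd>\<lambda> r)\<close> is a multiple of \<open>sin(\<surd>\<lambda> r - \<zeta>)\<close>. Finally \<open>h = v / r\<close> is bounded and
  Lipschitz on \<open>[0, \<infinity>)\<close>, hence Hoelder continuous.
\<close>

section \<open>Hoelder norms\<close>

lemma holder_norm_less_imp_abs_less:
  fixes f :: "real \<Rightarrow> real"
  assumes "holder_norm \<alpha> {0..} f + ereal s < ereal C" and "x \<ge> 0"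
  shows "\<bar>f x\<bar> + s < C"
proof -
  have "ereal \<bar>f x\<bar> \<le> (SUP x\<in>{0..}. ereal \<bar>f x\<bar>)"
    using assms(2) by (intro SUP_upper) auto
  moreover have "0 \<le> (SUP p\<in>{(x, y). x \<in> {0::real..} \<and> y \<in> {0..} \<and> x \<noteq> y}.
      ereal (\<bar>f (fst p) - f (snd p)\<bar> / \<bar>fst p - snd p\<bar> powr \<alpha>))"
    by (rule SUP_upper2[of "(0, 1)"]) auto
  ultimately have "ereal \<bar>f x\<bar> + ereal s \<le> holder_norm \<alpha> {0..} f + ereal s"
    unfolding holder_norm_def by (intro add_mono order.refl) (simp add: add_increasing2)
  then have "ereal \<bar>f x\<bar> + ereal s < ereal C"
    using assms(1) by (rule le_less_trans)
  then show ?thesis by simp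
qed

lemma holder_norm_less_imp_holder:
  fixes f :: "real \<Rightarrow> real"
  assumes "holder_norm \<alpha> {0..} f + ereal s < ereal C"
  obtains R where "\<And>x y. x \<ge> 0 \<Longrightarrow> y \<ge> 0 \<Longrightarrow> \<bar>f x - f y\<bar> \<le> R * \<bar>x - y\<bar> powr \<alpha>"
proof -
  define A where "A = (SUP x\<in>{0::real..}. ereal \<bar>f x\<bar>)"
  define B where "B = (SUP p\<in>{(x, y). x \<in> {0::real..} \<and> y \<in> {0..} \<and> x \<noteq> y}.
      ereal (\<bar>f (fst p) - f (snd p)\<bar> / \<bar>fst p - snd p\<bar> powr \<alpha>))"
  have "A \<ge> 0" unfolding A_def by (rule SUP_upper2[of 0]) auto
  moreover have "A + B + ereal s < ereal C"
    using assms by (simp add: holder_norm_def A_def B_def)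
  ultimately have "B \<noteq> \<infinity>" by auto
  moreover have "B \<ge> 0" unfolding B_def by (rule SUP_upper2[of "(0, 1)"]) auto
  ultimately obtain R where R: "B = ereal R" "R \<ge> 0" by (cases B) auto
  have "\<bar>f x - f y\<bar> \<le> R * \<bar>x - y\<bar> powr \<alpha>" if "x \<ge> 0" "y \<ge> 0" for x y
  proof (cases "x = y")
    case False
    have "ereal (\<bar>f x - f y\<bar> / \<bar>x - y\<bar> powr \<alpha>) \<le> B"
      unfolding B_def by (rule SUP_upper2[of "(x, y)"]) (use that False in auto)
    with R False show ?thesis by (simp add: divide_le_eq)
  qed (use R in simp)
  then show thesis by (rule that)
qed

lemma holder_imp_continuous_on:
  fixes f :: "real \<Rightarrow> real"
  assumes "\<alpha> > 0" and "\<And>x y. x \<in> S \<Longrightarrow> y \<in> S \<Longrightarrow> \<bar>f x - f y\<bar> \<le> R * \<bar>x - y\<bar> powr \<alpha>"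
  shows "continuous_on S f"
  unfolding continuous_on_def
proof
  fix x assume x: "x \<in> S"
  have "((\<lambda>y. R * \<bar>y - x\<bar> powr \<alpha>) \<longlongrightarrow> R * \<bar>x - x\<bar> powr \<alpha>) (at x within S)"
    using assms(1) by (intro tendsto_intros) auto
  then have "((\<lambda>y. R * \<bar>y - x\<bar> powr \<alpha>) \<longlongrightarrow> 0) (at x within S)"
    using assms(1) by simp
  moreover have "\<forall>\<^sub>F y in at x within S. norm (f y - f x) \<le> R * \<bar>y - x\<bar> powr \<alpha>"
    using assms(2) x by (auto simp: eventually_at_filter)
  ultimately have "((\<lambda>y. f y - f x) \<longlongrightarrow> 0) (at x within S)"
    by (rule Lim_null_comparison[rotated])
  then show "(f \<longlongrightarrow> f x) (at x within S)" by (simp add: LIM_zero_iff)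
qed

lemma weighted_holder_bounds:
  fixes f :: "real \<Rightarrow> real"
  assumes "0 < \<alpha>" and "0 \<le> s" and H: "holder_norm \<alpha> {0..} (\<lambda>r. f r * (1 + r) ^ 3) + ereal s < ereal C"
  shows "continuous_on {0..} f" and "\<And>r. r \<ge> 0 \<Longrightarrow> \<bar>f r\<bar> \<le> C / (1 + r) ^ 3" and "s \<le> C"
proof -
  have bound: "\<bar>f r * (1 + r) ^ 3\<bar> + s < C" if "r \<ge> 0" for r
    using holder_norm_less_imp_abs_less[OF H that] .
  then show "s \<le> C" using bound[of 0] by simp
  show "\<bar>f r\<bar> \<le> C / (1 + r) ^ 3" if "r \<ge> 0" for r
    using bound[OF that] \<open>0 \<le> s\<close> that by (simp add: abs_mult le_divide_eq)
  obtain R where "\<And>x y. x \<ge> 0 \<Longrightarrow> y \<ge> 0 \<Longrightarrow>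
      \<bar>f x * (1 + x) ^ 3 - f y * (1 + y) ^ 3\<bar> \<le> R * \<bar>x - y\<bar> powr \<alpha>"
    using holder_norm_less_imp_holder[OF H] by blast
  then have weighted: "continuous_on {0..} (\<lambda>r. f r * (1 + r) ^ 3)"
    using \<open>0 < \<alpha>\<close> by (intro holder_imp_continuous_on) auto
  have "continuous_on {0..} (\<lambda>r. f r * (1 + r) ^ 3 * inverse ((1 + r) ^ 3))"
    by (intro continuous_on_mult[OF weighted] continuous_on_inverse continuous_intros) auto
  then show "continuous_on {0..} f"
    by (rule continuous_on_eq) auto
qed

lemma holder_norm_finite_if_bounded_lipschitz:
  fixes f :: "real \<Rightarrow> real"
  assumes "0 < \<alpha>" "\<alpha> \<le> 1" and B: "\<And>x. x \<in> S \<Longrightarrow> \<bar>f x\<bar> \<le> B"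
    and L: "\<And>x y. x \<in> S \<Longrightarrow> y \<in> S \<Longrightarrow> \<bar>f x - f y\<bar> \<le> L * \<bar>x - y\<bar>" and "L \<ge> 0"
  shows "holder_norm \<alpha> S f < \<infinity>"
proof -
  have "(SUP p\<in>{(x, y). x \<in> S \<and> y \<in> S \<and> x \<noteq> y}.
        ereal (\<bar>f (fst p) - f (snd p)\<bar> / \<bar>fst p - snd p\<bar> powr \<alpha>)) \<le> ereal (L + 2 * \<bar>B\<bar>)"
  proof (rule SUP_least, clarify)
    fix x y assume xy: "x \<in> S" "y \<in> S" "x \<noteq> y"
    define t where "t = \<bar>x - y\<bar>"
    have t: "t > 0" "t powr \<alpha> > 0" using xy by (simp_all add: t_def)
    \<comment> \<open>Short distances use the Lipschitz bound, long ones the sup bound.\<close>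
    have "\<bar>f x - f y\<bar> \<le> (L + 2 * \<bar>B\<bar>) * t powr \<alpha>"
    proof (cases "t \<le> 1")
      case True
      have "t = t powr 1" using t by simp
      also have "\<dots> \<le> t powr \<alpha>" using True t assms(1,2) by (intro powr_mono') auto
      finally have "t \<le> t powr \<alpha>" .
      have "\<bar>f x - f y\<bar> \<le> L * t" using L[OF xy(1,2)] by (simp add: t_def)
      also have "\<dots> \<le> L * t powr \<alpha>" using \<open>t \<le> t powr \<alpha>\<close> \<open>L \<ge> 0\<close> by (rule mult_left_mono)
      also have "\<dots> \<le> (L + 2 * \<bar>B\<bar>) * t powr \<alpha>" using t by (intro mult_right_mono) auto
      finally show ?thesis .
    next
      case False
      then have "1 \<le> t powr \<alpha>" using assms(1) by (simp add: ge_one_powr_ge_zero)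
      have "\<bar>f x - f y\<bar> \<le> 2 * \<bar>B\<bar>" using B[OF xy(1)] B[OF xy(2)] by linarith
      also have "\<dots> \<le> (L + 2 * \<bar>B\<bar>) * t powr \<alpha>"
        using \<open>1 \<le> t powr \<alpha>\<close> \<open>L \<ge> 0\<close> mult_left_mono[of 1 "t powr \<alpha>" "L + 2 * \<bar>B\<bar>"] by simp
      finally show ?thesis .
    qed
    with t show "ereal (\<bar>f (fst (x, y)) - f (snd (x, y))\<bar> / \<bar>fst (x, y) - snd (x, y)\<bar> powr \<alpha>)
        \<le> ereal (L + 2 * \<bar>B\<bar>)"
      by (simp add: t_def divide_le_eq)
  qed
  moreover have "(SUP x\<in>S. ereal \<bar>f x\<bar>) \<le> ereal \<bar>B\<bar>"
    by (rule SUP_least) (use B in force)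
  ultimately have "holder_norm \<alpha> S f \<le> ereal \<bar>B\<bar> + ereal (L + 2 * \<bar>B\<bar>)"
    unfolding holder_norm_def by (intro add_mono)
  also have "\<dots> < \<infinity>" by simp
  finally show ?thesis .
qed

section \<open>The regular solution of the homogeneous equation\<close>

lemma harmonic_oscillator_solution_form:
  fixes k :: real and w w' :: "real \<Rightarrow> real"
  assumes dw: "\<And>r. r > 0 \<Longrightarrow> (w has_real_derivative w' r) (at r)"
    and dw': "\<And>r. r > 0 \<Longrightarrow> (w' has_real_derivative - (k\<^sup>2 * w r)) (at r)"
  obtains a b where "\<And>r. r > 0 \<Longrightarrow> k * w r = a * sin (k * r) - b * cos (k * r)"
proof -
  define E1 where "E1 r = w' r * cos (k * r) + k * w r * sin (k * r)" for r
  define E2 where "E2 r = w' r * sin (k * r) - k * w r * cos (k * r)" for r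
  have "(E1 has_real_derivative 0) (at r)" "(E2 has_real_derivative 0) (at r)" if "r > 0" for r
    unfolding E1_def E2_def
    by (rule derivative_eq_intros dw[OF that] dw'[OF that] refl | simp add: power2_eq_square algebra_simps)+
  then have "(E1 has_real_derivative 0) (at r within {0<..})" "(E2 has_real_derivative 0) (at r within {0<..})"
    if "r \<in> {0<..}" for r
    using that by (auto intro: has_field_derivative_at_within)
  then obtain a b where a: "\<And>r. r > 0 \<Longrightarrow> E1 r = a" and b: "\<And>r. r > 0 \<Longrightarrow> E2 r = b"
    using has_field_derivative_zero_constant[OF convex_real_interval(3)] by (metis greaterThan_iff)
  have "E1 r * sin (k * r) - E2 r * cos (k * r) = k * w r * (sin (k * r) * sin (k * r) + cos (k * r) * cos (k * r))" for r
    unfolding E1_def E2_def by (simp only: algebra_simps)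
  then have "k * w r = E1 r * sin (k * r) - E2 r * cos (k * r)" for r
    by (metis mult_1_right sin_cos_squared_add3 add.commute)
  with a b show thesis by (intro that) auto
qed

lemma radial_regular_solution_form:
  fixes lam :: real and J :: "real \<Rightarrow> real"
  assumes "lam > 0" and J_sol: "solves_radial lam (\<lambda>_. 0) J"
    and J_regular: "(J \<longlongrightarrow> L) (at_right 0)"
  obtains a where "\<And>r. r > 0 \<Longrightarrow> J r = a * sin (sqrt lam * r) / r"
proof -
  define k where "k = sqrt lam"
  have k: "k > 0" "k\<^sup>2 = lam" using \<open>lam > 0\<close> by (auto simp: k_def)
  define w where "w r = r * J r" for r
  define w' where "w' r = J r + r * deriv J r" for r
  have dJ: "(J has_real_derivative deriv J r) (at r)"
    and dJ': "(deriv J has_real_derivative - (2 / r) * deriv J r - lam * J r) (at r)" if "r > 0" for r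
    using J_sol that by (simp_all add: solves_radial_def)
  have "(w has_real_derivative w' r) (at r)" if "r > 0" for r
    unfolding w_def w'_def by (rule derivative_eq_intros dJ[OF that] refl | simp)+
  moreover have "(w' has_real_derivative - (k\<^sup>2 * w r)) (at r)" if "r > 0" for r
  proof -
    have "(w' has_real_derivative deriv J r + (deriv J r + r * (- (2 / r) * deriv J r - lam * J r))) (at r)"
      unfolding w'_def by (rule derivative_eq_intros dJ[OF that] dJ'[OF that] refl)+ simp
    then show ?thesis using that by (simp add: w_def k(2) field_simps)
  qed
  ultimately obtain a b where ab: "\<And>r. r > 0 \<Longrightarrow> k * w r = a * sin (k * r) - b * cos (k * r)"
    using harmonic_oscillator_solution_form by metis
  \<comment> \<open>Regularity at the origin kills the cosine mode: \<open>r J r \<rightarrow> 0\<close>.\<close>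
  have "((\<lambda>r. k * w r) \<longlongrightarrow> k * (0 * L)) (at_right 0)"
    unfolding w_def by (intro tendsto_intros J_regular)
  moreover have "((\<lambda>r. k * w r) \<longlongrightarrow> a * sin (k * 0) - b * cos (k * 0)) (at_right 0)"
  proof (rule Lim_transform_eventually)
    show "((\<lambda>r. a * sin (k * r) - b * cos (k * r)) \<longlongrightarrow> a * sin (k * 0) - b * cos (k * 0)) (at_right 0)"
      by (intro tendsto_intros)
    show "\<forall>\<^sub>F r in at_right 0. a * sin (k * r) - b * cos (k * r) = k * w r"
      using eventually_at_right_less[of 0] by eventually_elim (simp add: ab)
  qed
  ultimately have "b = 0"
    using tendsto_unique[OF trivial_limit_at_right_real] by fastforce
  show thesis
  proof (rule that)
    fix r :: real assume "r > 0"
    with ab[of r] \<open>b = 0\<close> k show "J r = a / k * sin (sqrt lam * r) / r"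
      by (simp add: w_def k_def field_simps)
  qed
qed

lemma phase_cos_eq_zero_if_sine_asymptotic:
  fixes k \<zeta> a :: real
  assumes "k > 0"
    and "(\<lambda>r. a * sin (k * r) / r - cos (k * r - \<zeta>) / r) \<in> O[at_top](\<lambda>r. 1 / r ^ 2)"
  shows "cos \<zeta> = 0"
proof (rule ccontr)
  assume nz: "cos \<zeta> \<noteq> 0"
  obtain c where "c > 0" and "\<forall>\<^sub>F r in at_top. \<bar>a * sin (k * r) / r - cos (k * r - \<zeta>) / r\<bar> \<le> c * \<bar>1 / r ^ 2\<bar>"
    using assms(2) by (elim landau_o.bigE) simp
  then obtain R where R: "\<And>r. r \<ge> R \<Longrightarrow> \<bar>a * sin (k * r) / r - cos (k * r - \<zeta>) / r\<bar> \<le> c / r ^ 2"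
    unfolding eventually_at_top_linorder by auto
  \<comment> \<open>Along the zeros \<open>r = 2\<pi>n/k\<close> of the sine the difference is \<open>cos \<zeta> / r\<close>, which is not \<open>O(r\<^sup>-\<^sup>2)\<close>.\<close>
  define M where "M = max (max R 1) (c / \<bar>cos \<zeta>\<bar>)"
  obtain n :: nat where n: "M * k / (2 * pi) < real n"
    using reals_Archimedean2 by blast
  define r where "r = 2 * pi * real n / k"
  have "M * k < 2 * pi * real n" using n pi_gt_zero by (simp add: pos_divide_less_eq mult.commute)
  then have "M < r" using \<open>k > 0\<close> by (simp add: r_def pos_less_divide_eq)
  then have "max (max R 1) (c / \<bar>cos \<zeta>\<bar>) < r" by (simp add: M_def)
  then have r: "r \<ge> R" "r \<ge> 1" "c < \<bar>cos \<zeta>\<bar> * r"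
    using nz by (auto simp: field_simps)
  have kr: "k * r = real (2 * n) * pi" using \<open>k > 0\<close> by (simp add: r_def)
  have "\<bar>cos \<zeta>\<bar> / r \<le> c / r ^ 2"
    using R[OF r(1)] r(2) unfolding kr cos_diff by (simp add: sin_npi cos_npi abs_divide)
  then have "\<bar>cos \<zeta>\<bar> * r \<le> c" using r(2) by (simp add: field_simps power2_eq_square)
  with r(3) show False by simp
qed

lemma radial_regular_phase:
  fixes lam \<zeta> :: real and J :: "real \<Rightarrow> real"
  assumes "lam > 0" and "solves_radial lam (\<lambda>_. 0) J" and "\<exists>L. (J \<longlongrightarrow> L) (at_right 0)"
    and J_asym: "(\<lambda>r. J r - cos (sqrt lam * r - \<zeta>) / r) \<in> O[at_top](\<lambda>r. 1 / r ^ 2)"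
  shows "cos \<zeta> = 0"
proof -
  obtain a where J: "\<And>r. r > 0 \<Longrightarrow> J r = a * sin (sqrt lam * r) / r"
    using radial_regular_solution_form assms(1-3) by metis
  have "eventually (\<lambda>r. J r - cos (sqrt lam * r - \<zeta>) / r
      = a * sin (sqrt lam * r) / r - cos (sqrt lam * r - \<zeta>) / r) at_top"
    using eventually_gt_at_top[of 0] by eventually_elim (simp add: J)
  with J_asym have "(\<lambda>r. a * sin (sqrt lam * r) / r - cos (sqrt lam * r - \<zeta>) / r) \<in> O[at_top](\<lambda>r. 1 / r ^ 2)"
    by (simp only: landau_o.big.in_cong)
  then show ?thesis
    by (rule phase_cos_eq_zero_if_sine_asymptotic[rotated]) (use \<open>lam > 0\<close> in simp)
qed

section \<open>Division by the radius\<close>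

lemma abs_diff_le_if_deriv_bounded:
  fixes f f' :: "real \<Rightarrow> real"
  assumes "a \<le> b" and "continuous_on {a..b} f"
    and "\<And>x. a < x \<Longrightarrow> x < b \<Longrightarrow> (f has_real_derivative f' x) (at x)"
    and "\<And>x. a < x \<Longrightarrow> x < b \<Longrightarrow> \<bar>f' x\<bar> \<le> M"
  shows "\<bar>f b - f a\<bar> \<le> M * (b - a)"
proof (cases "a = b")
  case False
  with assms(1) have "a < b" by simp
  moreover have "f differentiable (at x)" if "a < x" "x < b" for x
    using assms(3)[OF that] by (auto simp: real_differentiable_def)
  ultimately obtain l z where z: "a < z" "z < b" "(f has_real_derivative l) (at z)"
    and eq: "f b - f a = (b - a) * l"
    using MVT[OF _ assms(2)] by blast
  have "l = f' z" using DERIV_unique[OF z(3) assms(3)[OF z(1,2)]] .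
  with assms(4)[OF z(1,2)] have "\<bar>l\<bar> \<le> M" by simp
  with eq \<open>a < b\<close> show ?thesis by (simp add: abs_mult mult.commute mult_right_mono)
qed simp

lemma lipschitz_on_nonneg_if_deriv_bounded:
  fixes h h' :: "real \<Rightarrow> real"
  assumes dh: "\<And>r. r > 0 \<Longrightarrow> (h has_real_derivative h' r) (at r)"
    and bound: "\<And>r. r > 0 \<Longrightarrow> \<bar>h' r\<bar> \<le> L"
    and at_zero: "\<And>r. r > 0 \<Longrightarrow> \<bar>h r - h 0\<bar> \<le> L * r"
    and "x \<ge> 0" "y \<ge> 0"
  shows "\<bar>h x - h y\<bar> \<le> L * \<bar>x - y\<bar>"
proof -
  have *: "\<bar>h y - h x\<bar> \<le> L * (y - x)" if "0 \<le> x" "x \<le> y" for x y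
  proof (cases "x = 0")
    case True
    with at_zero[of y] that show ?thesis by (cases "y = 0") auto
  next
    case False
    with that have "continuous_on {x..y} h"
      by (intro continuous_at_imp_continuous_on ballI DERIV_isCont[OF dh]) auto
    with that False show ?thesis
      using abs_diff_le_if_deriv_bounded[of x y h h' L] dh bound by simp
  qed
  show ?thesis
  proof (cases "x \<le> y")
    case True
    with *[OF \<open>x \<ge> 0\<close> True] show ?thesis by (simp add: abs_minus_commute)
  next
    case False
    with *[OF \<open>y \<ge> 0\<close>, of x] show ?thesis by simp
  qed
qed

lemma remainder_bounds_at_zero:
  fixes v v' v'' :: "real \<Rightarrow> real"
  assumes "v 0 = 0" and cont: "continuous_on {0..} v" "continuous_on {0..} v'"
    and dv: "\<And>r. r > 0 \<Longrightarrow> (v has_real_derivative v' r) (at r)"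
    and dv': "\<And>r. r > 0 \<Longrightarrow> (v' has_real_derivative v'' r) (at r)"
    and M: "\<And>r. r > 0 \<Longrightarrow> \<bar>v'' r\<bar> \<le> M"
    and "r > 0"
  shows "\<bar>v' r - v' 0\<bar> \<le> M * r" and "\<bar>r * v' r - v r\<bar> \<le> M * r\<^sup>2"
proof -
  have cont_r: "continuous_on {0..r} v" "continuous_on {0..r} v'"
    using cont by (auto intro: continuous_on_subset)
  show "\<bar>v' r - v' 0\<bar> \<le> M * r"
    using abs_diff_le_if_deriv_bounded[OF _ cont_r(2) dv' M] \<open>r > 0\<close> by simp
  \<comment> \<open>The derivative of \<open>s v' s - v s\<close> is \<open>s v'' s\<close>.\<close>
  have "\<bar>(r * v' r - v r) - (0 * v' 0 - v 0)\<bar> \<le> (r * M) * (r - 0)"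
  proof (rule abs_diff_le_if_deriv_bounded)
    show "continuous_on {0..r} (\<lambda>s. s * v' s - v s)"
      by (intro continuous_intros cont_r)
    show "((\<lambda>s. s * v' s - v s) has_real_derivative s * v'' s) (at s)" if "0 < s" for s
      by (rule derivative_eq_intros dv[OF that] dv'[OF that] refl | simp)+
    show "\<bar>s * v'' s\<bar> \<le> r * M" if "0 < s" "s < r" for s
      using M[OF that(1)] that by (simp add: abs_mult mult_mono)
  qed (use \<open>r > 0\<close> in simp)
  with \<open>v 0 = 0\<close> show "\<bar>r * v' r - v r\<bar> \<le> M * r\<^sup>2" by (simp add: power2_eq_square mult_ac)
qed

lemma has_real_derivative_div_id:
  fixes v h :: "real \<Rightarrow> real"
  assumes "(v has_real_derivative v') (at r)" and "r > 0" and h: "\<And>s. s > 0 \<Longrightarrow> h s = v s / s"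
  shows "(h has_real_derivative (r * v' - v r) / r\<^sup>2) (at r)"
proof -
  have "((\<lambda>s. v s / s) has_real_derivative (r * v' - v r) / r\<^sup>2) (at r)"
    using assms(1,2) by (auto intro!: derivative_eq_intros simp: power2_eq_square field_simps)
  then show ?thesis
    by (rule has_field_derivative_transform_within_open[where S = "{0<..}"]) (use assms(2) h in auto)
qed

lemma quotient_derivative_bound:
  fixes r x y B M :: real
  assumes "r > 0" "\<bar>x\<bar> \<le> B" "\<bar>y\<bar> \<le> B" "\<bar>r * y - x\<bar> \<le> M * r\<^sup>2" "M \<ge> 0"
  shows "\<bar>(r * y - x) / r\<^sup>2\<bar> \<le> 2 * M + 2 * B"
proof -
  have "B \<ge> 0" using assms(2) by simp
  have "\<bar>r * y - x\<bar> \<le> (2 * M + 2 * B) * r\<^sup>2"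
  proof (cases "r \<le> 1")
    case True
    have "M * r\<^sup>2 \<le> (2 * M + 2 * B) * r\<^sup>2" using assms(5) \<open>B \<ge> 0\<close> by (intro mult_right_mono) auto
    with assms(4) show ?thesis by linarith
  next
    case False
    have "\<bar>r * y - x\<bar> \<le> r * \<bar>y\<bar> + \<bar>x\<bar>"
      using abs_triangle_ineq4[of "r * y" x] assms(1) by (simp add: abs_mult)
    also have "\<dots> \<le> r * B + r * B"
    proof (rule add_mono)
      show "r * \<bar>y\<bar> \<le> r * B" using assms(3) False by (intro mult_left_mono) auto
      show "\<bar>x\<bar> \<le> r * B" using assms(2) False \<open>B \<ge> 0\<close> mult_right_mono[of 1 r B] by simp
    qed
    also have "\<dots> \<le> r\<^sup>2 * B + r\<^sup>2 * B"
      using False \<open>B \<ge> 0\<close> by (intro add_mono mult_right_mono) (auto simp: power2_eq_square)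
    also have "\<dots> \<le> (2 * M + 2 * B) * r\<^sup>2" using \<open>M \<ge> 0\<close> by (simp add: algebra_simps)
    finally show ?thesis .
  qed
  with assms(1) show ?thesis by (simp add: abs_divide divide_le_eq)
qed

lemma quotient_increment_bound:
  fixes r x y y0 B M :: real
  assumes "r > 0" "\<bar>x\<bar> \<le> B" "\<bar>y0\<bar> \<le> B" "\<bar>y - y0\<bar> \<le> M * r" "\<bar>r * y - x\<bar> \<le> M * r\<^sup>2" "M \<ge> 0"
  shows "\<bar>x / r - y0\<bar> \<le> (2 * M + 2 * B) * r"
proof (cases "r \<le> 1")
  case True
  have "x / r - y0 = (y - y0) - (r * y - x) / r" using assms(1) by (simp add: field_simps)
  then have "\<bar>x / r - y0\<bar> \<le> \<bar>y - y0\<bar> + \<bar>r * y - x\<bar> / r"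
    using assms(1) abs_triangle_ineq4[of "y - y0" "(r * y - x) / r"] by (simp add: abs_divide)
  also have "\<dots> \<le> M * r + M * r\<^sup>2 / r" using assms by (intro add_mono divide_right_mono) auto
  also have "\<dots> \<le> (2 * M + 2 * B) * r"
    using assms(1,3) by (simp add: power2_eq_square algebra_simps)
  finally show ?thesis .
next
  case False
  have "\<bar>x\<bar> / r \<le> \<bar>x\<bar>" using False by (simp add: divide_le_eq mult_le_cancel_left1)
  with assms(2) have "\<bar>x\<bar> / r \<le> B" by linarith
  then have "\<bar>x / r - y0\<bar> \<le> B + B" using assms(1,3) abs_triangle_ineq4[of "x / r" y0] by (simp add: abs_divide)
  also have "\<dots> \<le> (2 * M + 2 * B) * r"
    using False assms(3,6) mult_left_mono[of 1 r "2 * M + 2 * B"] by simp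
  finally show ?thesis .
qed

lemma holder_norm_div_id_finite:
  fixes v v' v'' :: "real \<Rightarrow> real"
  assumes "0 < \<alpha>" "\<alpha> \<le> 1" and "v 0 = 0"
    and cont: "continuous_on {0..} v" "continuous_on {0..} v'"
    and dv: "\<And>r. r > 0 \<Longrightarrow> (v has_real_derivative v' r) (at r)"
    and dv': "\<And>r. r > 0 \<Longrightarrow> (v' has_real_derivative v'' r) (at r)"
    and B: "\<And>r. r \<ge> 0 \<Longrightarrow> \<bar>v r\<bar> \<le> B" "\<And>r. r \<ge> 0 \<Longrightarrow> \<bar>v' r\<bar> \<le> B"
    and M: "\<And>r. r > 0 \<Longrightarrow> \<bar>v'' r\<bar> \<le> M"
  shows "holder_norm \<alpha> {0..} (\<lambda>r. if r = 0 then v' 0 else v r / r) < \<infinity>"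
proof -
  define h where "h r = (if r = 0 then v' 0 else v r / r)" for r
  define L where "L = 2 * M + 2 * B"
  have "M \<ge> 0" using M[of 1] by auto
  have remainder: "\<bar>v' r - v' 0\<bar> \<le> M * r" "\<bar>r * v' r - v r\<bar> \<le> M * r\<^sup>2" if "r > 0" for r
    using remainder_bounds_at_zero[of v v' v'' M r] \<open>v 0 = 0\<close> cont dv dv' M that by blast+
  have dh: "(h has_real_derivative (r * v' r - v r) / r\<^sup>2) (at r)" if "r > 0" for r
    using that by (intro has_real_derivative_div_id[OF dv[OF that]]) (simp_all add: h_def)
  have dh_bound: "\<bar>(r * v' r - v r) / r\<^sup>2\<bar> \<le> L" if "r > 0" for r
    unfolding L_def using that B(1,2)[OF less_imp_le[OF that]] remainder(2)[OF that] \<open>M \<ge> 0\<close>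
    by (rule quotient_derivative_bound)
  have at_zero: "\<bar>h r - h 0\<bar> \<le> L * r" if "r > 0" for r
  proof -
    have "\<bar>v r / r - v' 0\<bar> \<le> L * r"
      unfolding L_def using that B(1)[OF less_imp_le[OF that]] B(2)[of 0] remainder[OF that] \<open>M \<ge> 0\<close>
      by (intro quotient_increment_bound) simp_all
    with that show ?thesis by (simp add: h_def)
  qed
  have h_bound: "\<bar>h r\<bar> \<le> B + L" if "r \<ge> 0" for r
  proof (cases "r \<le> 1")
    case True
    then have "\<bar>h r - h 0\<bar> \<le> L"
      using at_zero[of r] \<open>r \<ge> 0\<close> mult_left_mono[of r 1 L] \<open>M \<ge> 0\<close> B(1)[of 0]
      by (cases "r = 0") (auto simp: L_def)
    then show ?thesis using B(2)[of 0] by (simp add: h_def)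
  next
    case False
    then have "\<bar>v r\<bar> / r \<le> \<bar>v r\<bar>" by (simp add: divide_le_eq mult_le_cancel_left1)
    then show ?thesis using B(1)[of r] False \<open>M \<ge> 0\<close> by (simp add: h_def abs_divide L_def)
  qed
  note lipschitz = lipschitz_on_nonneg_if_deriv_bounded[OF dh dh_bound at_zero]
  have "0 \<le> L" using \<open>M \<ge> 0\<close> B(1)[of 0] by (simp add: L_def)
  show ?thesis
    unfolding h_def[symmetric]
    by (rule holder_norm_finite_if_bounded_lipschitz[OF assms(1,2), where B = "B + L" and L = L])
      (use h_bound lipschitz \<open>0 \<le> L\<close> in auto)
qed

lemma solves_radial_div_id:
  fixes v v' \<eta> h :: "real \<Rightarrow> real"
  assumes dv: "\<And>r. r > 0 \<Longrightarrow> (v has_real_derivative v' r) (at r)"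
    and dv': "\<And>r. r > 0 \<Longrightarrow> (v' has_real_derivative r * \<eta> r - lam * v r) (at r)"
    and h: "\<And>r. r > 0 \<Longrightarrow> h r = v r / r"
  shows "solves_radial lam \<eta> h"
  unfolding solves_radial_def
proof (intro allI impI conjI)
  define h' where "h' r = (r * v' r - v r) / r\<^sup>2" for r
  have dh: "(h has_real_derivative h' r) (at r)" if "r > 0" for r
    unfolding h'_def using dv[OF that] that h by (rule has_real_derivative_div_id)
  then have deriv_h: "deriv h r = h' r" if "r > 0" for r
    using that by (simp add: DERIV_imp_deriv)
  fix r :: real assume "r > 0"
  show "(h has_real_derivative deriv h r) (at r)" using dh deriv_h \<open>r > 0\<close> by simp
  have "(h' has_real_derivative \<eta> r - 2 / r * h' r - lam * h r) (at r)"
    unfolding h'_def using \<open>r > 0\<close>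
    by (auto intro!: derivative_eq_intros dv dv' simp: h power2_eq_square field_simps)
  then have "(deriv h has_real_derivative \<eta> r - 2 / r * h' r - lam * h r) (at r)"
    by (rule has_field_derivative_transform_within_open[where S = "{0<..}"])
      (use \<open>r > 0\<close> deriv_h in auto)
  with deriv_h[OF \<open>r > 0\<close>]
  show "(deriv h has_real_derivative \<eta> r - 2 / r * deriv h r - lam * h r) (at r)" by simp
qed

section \<open>Variation of constants for integrable sources\<close>

lemma abs_sin_mult_le: "\<bar>sin x * a\<bar> \<le> \<bar>a :: real\<bar>"
  and abs_cos_mult_le: "\<bar>cos x * a\<bar> \<le> \<bar>a :: real\<bar>"
  by (simp_all add: abs_mult mult_left_le_one_le)

lemma pi_half_minus_arctan_le:
  assumes "r > 0" shows "pi / 2 - arctan r \<le> 1 / r"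
proof -
  have "pi / 2 - arctan r = arctan (inverse r)"
    using Complex_Transcendental.arctan_inverse[OF assms] by simp
  also have "\<dots> \<le> inverse r" using assms by (intro arctan_le_self) simp
  finally show ?thesis by (simp add: inverse_eq_divide)
qed

lemma integral_diff_le_arctan_diff:
  fixes f :: "real \<Rightarrow> real"
  assumes cont: "continuous_on {0..} f" and bound: "\<And>s. s \<ge> 0 \<Longrightarrow> \<bar>f s\<bar> \<le> K / (1 + s\<^sup>2)"
    and "0 \<le> r" "r \<le> t"
  shows "\<bar>integral {0..t} f - integral {0..r} f\<bar> \<le> K * (arctan t - arctan r)"
proof -
  have integrable: "f integrable_on {a..b}" if "0 \<le> a" for a b
    using that by (intro integrable_continuous_interval continuous_on_subset[OF cont]) auto
  have arctan: "((\<lambda>s. K / (1 + s\<^sup>2)) has_integral (K * arctan t - K * arctan r)) {r..t}"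
  proof (rule fundamental_theorem_of_calculus[OF \<open>r \<le> t\<close>])
    fix x
    have "((\<lambda>s. K * arctan s) has_real_derivative K * inverse (1 + x\<^sup>2)) (at x)"
      by (intro DERIV_cmult DERIV_arctan)
    then show "((\<lambda>s. K * arctan s) has_vector_derivative K / (1 + x\<^sup>2)) (at x within {r..t})"
      by (simp add: has_real_derivative_iff_has_vector_derivative[symmetric] divide_inverse
          has_field_derivative_at_within)
  qed
  have "integral {0..r} f + integral {r..t} f = integral {0..t} f"
    using assms(3,4) integrable[of 0 t] by (intro Henstock_Kurzweil_Integration.integral_combine) auto
  then have "\<bar>integral {0..t} f - integral {0..r} f\<bar> = norm (integral {r..t} f)" by simp
  also have "\<dots> \<le> integral {r..t} (\<lambda>s. K / (1 + s\<^sup>2))"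
    using bound assms(3) integrable[OF assms(3)] has_integral_integrable[OF arctan]
    by (intro integral_norm_bound_integral) auto
  also have "\<dots> = K * (arctan t - arctan r)"
    using arctan by (simp add: integral_unique right_diff_distrib)
  finally show ?thesis .
qed

lemma integral_tail_bound:
  fixes f :: "real \<Rightarrow> real"
  assumes cont: "continuous_on {0..} f" and bound: "\<And>s. s \<ge> 0 \<Longrightarrow> \<bar>f s\<bar> \<le> K / (1 + s\<^sup>2)"
  obtains I where "\<And>r. r \<ge> 0 \<Longrightarrow> \<bar>integral {0..r} f - I\<bar> \<le> K * (pi / 2 - arctan r)"
proof -
  define F where "F r = integral {0..r} f" for r
  have "K \<ge> 0" using bound[of 0] by simp
  have tail: "\<bar>F t - F r\<bar> \<le> K * (pi / 2 - arctan r)" if "0 \<le> r" "r \<le> t" for r t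
  proof -
    have "K * (arctan t - arctan r) \<le> K * (pi / 2 - arctan r)"
      using arctan_ubound[of t] \<open>K \<ge> 0\<close> by (intro mult_left_mono) auto
    then show ?thesis
      using integral_diff_le_arctan_diff[OF cont bound that] by (simp add: F_def)
  qed
  have "Cauchy (\<lambda>n. F (real n))"
  proof (rule metric_CauchyI)
    fix e :: real assume "e > 0"
    obtain N :: nat where N: "2 * K / e < real N" using reals_Archimedean2 by blast
    then have "N > 0" using \<open>K \<ge> 0\<close> \<open>e > 0\<close> by (auto intro!: Nat.gr0I simp: field_simps)
    then have "K * (pi / 2 - arctan (real N)) \<le> K / real N"
      using pi_half_minus_arctan_le[of "real N"] \<open>K \<ge> 0\<close> mult_left_mono by fastforce
    also have "\<dots> < e / 2" using N \<open>N > 0\<close> \<open>e > 0\<close> by (simp add: field_simps)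
    finally have small: "K * (pi / 2 - arctan (real N)) < e / 2" .
    show "\<exists>N. \<forall>m\<ge>N. \<forall>n\<ge>N. dist (F (real m)) (F (real n)) < e"
    proof (intro exI allI impI)
      fix m n assume "N \<le> m" "N \<le> n"
      then have "\<bar>F (real m) - F (real N)\<bar> < e / 2" "\<bar>F (real n) - F (real N)\<bar> < e / 2"
        using tail[of "real N" "real m"] tail[of "real N" "real n"] small by auto
      then show "dist (F (real m)) (F (real n)) < e" unfolding dist_real_def by arith
    qed
  qed
  then obtain I where I: "(\<lambda>n. F (real n)) \<longlonglongrightarrow> I"
    by (auto simp: Cauchy_convergent_iff convergent_def)
  have "\<bar>F r - I\<bar> \<le> K * (pi / 2 - arctan r)" if "r \<ge> 0" for r
  proof (rule tendsto_le[OF trivial_limit_sequentially tendsto_const])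
    show "((\<lambda>n. \<bar>F r - F (real n)\<bar>) \<longlongrightarrow> \<bar>F r - I\<bar>) sequentially"
      by (intro tendsto_intros I)
    have "\<forall>\<^sub>F n in sequentially. r \<le> real n"
      by (rule eventually_sequentiallyI[of "nat \<lceil>r\<rceil>"]) linarith
    then show "\<forall>\<^sub>F n in sequentially. \<bar>F r - F (real n)\<bar> \<le> K * (pi / 2 - arctan r)"
      by eventually_elim (use tail that in \<open>simp add: abs_minus_commute\<close>)
  qed
  then show thesis by (intro that) (simp add: F_def)
qed

lemma indefinite_integral_decaying:
  fixes f :: "real \<Rightarrow> real"
  assumes cont: "continuous_on {0..} f" and bound: "\<And>s. s \<ge> 0 \<Longrightarrow> \<bar>f s\<bar> \<le> K / (1 + s\<^sup>2)"
  obtains I where "continuous_on {0..} (\<lambda>r. integral {0..r} f)"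
    "\<And>r. r > 0 \<Longrightarrow> ((\<lambda>r. integral {0..r} f) has_real_derivative f r) (at r)"
    "\<And>r. r \<ge> 0 \<Longrightarrow> \<bar>integral {0..r} f - I\<bar> \<le> K * (pi / 2 - arctan r)"
    "\<And>r. r \<ge> 0 \<Longrightarrow> \<bar>integral {0..r} f - I\<bar> \<le> 2 * K"
proof -
  obtain I where tail: "\<And>r. r \<ge> 0 \<Longrightarrow> \<bar>integral {0..r} f - I\<bar> \<le> K * (pi / 2 - arctan r)"
    using integral_tail_bound[OF cont bound] by blast
  have deriv: "((\<lambda>r. integral {0..r} f) has_real_derivative f r) (at r)" if "r > 0" for r
  proof -
    have "continuous_on {0..r + 1} f" by (rule continuous_on_subset[OF cont]) auto
    from integral_has_real_derivative[OF this, of r] that show ?thesis by (simp add: at_within_Icc_at)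
  qed
  have "continuous_on {0..1} (\<lambda>r. integral {0..r} f)"
    by (intro indefinite_integral_continuous_1 integrable_continuous_interval continuous_on_subset[OF cont]) auto
  moreover have "continuous_on {1..} (\<lambda>r. integral {0..r} f)"
    by (intro continuous_at_imp_continuous_on ballI DERIV_isCont[OF deriv]) simp
  moreover have "{0..} = {0..1} \<union> {1::real..}" by auto
  ultimately have cont_integral: "continuous_on {0..} (\<lambda>r. integral {0..r} f)"
    by (metis closed_atLeast closed_atLeastAtMost continuous_on_closed_Un)
  have bounded: "\<bar>integral {0..r} f - I\<bar> \<le> 2 * K" if "r \<ge> 0" for r
  proof -
    have "0 \<le> arctan r" using that by simp
    then have "pi / 2 - arctan r \<le> 2" using pi_less_4 by linarith
    then have "K * (pi / 2 - arctan r) \<le> 2 * K" using bound[of 0] by (simp add: mult.commute mult_left_mono)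
    with tail[OF that] show ?thesis by linarith
  qed
  show thesis using cont_integral deriv tail bounded by (rule that)
qed

lemma oscillator_particular_solution:
  fixes k K :: real and g :: "real \<Rightarrow> real"
  assumes "k > 0" and cont: "continuous_on {0..} g"
    and bound: "\<And>s. s \<ge> 0 \<Longrightarrow> \<bar>g s\<bar> \<le> K / (1 + s\<^sup>2)"
  obtains u u' c where
    "\<And>r. r > 0 \<Longrightarrow> (u has_real_derivative u' r) (at r)"
    "\<And>r. r > 0 \<Longrightarrow> (u' has_real_derivative g r - k\<^sup>2 * u r) (at r)"
    "u 0 = 0" "continuous_on {0..} u" "continuous_on {0..} u'"
    "\<And>r. r \<ge> 0 \<Longrightarrow> \<bar>u r\<bar> \<le> 6 * K / k" "\<And>r. r \<ge> 0 \<Longrightarrow> \<bar>u' r\<bar> \<le> 6 * K"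
    "\<bar>c\<bar> \<le> 2 * K" "\<And>r. r > 0 \<Longrightarrow> \<bar>u r - c * cos (k * r) / k\<bar> \<le> 2 * K / (k * r)"
proof -
  \<comment> \<open>Variation of constants, with the integration constants chosen at infinity.\<close>
  define P where "P r = integral {0..r} (\<lambda>s. cos (k * s) * g s)" for r
  define Q where "Q r = integral {0..r} (\<lambda>s. sin (k * s) * g s)" for r
  have cont_cos: "continuous_on {0..} (\<lambda>s. cos (k * s) * g s)"
    and cont_sin: "continuous_on {0..} (\<lambda>s. sin (k * s) * g s)"
    by (intro continuous_intros cont)+
  have bound_cos: "\<bar>cos (k * s) * g s\<bar> \<le> K / (1 + s\<^sup>2)"
    and bound_sin: "\<bar>sin (k * s) * g s\<bar> \<le> K / (1 + s\<^sup>2)" if "s \<ge> 0" for s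
    using order_trans[OF abs_cos_mult_le bound[OF that]] order_trans[OF abs_sin_mult_le bound[OF that]] .
  obtain P_lim where cont_P: "continuous_on {0..} P"
    and dP: "\<And>r. r > 0 \<Longrightarrow> (P has_real_derivative cos (k * r) * g r) (at r)"
    and P_lim: "\<And>r. r \<ge> 0 \<Longrightarrow> \<bar>P r - P_lim\<bar> \<le> K * (pi / 2 - arctan r)"
      "\<And>r. r \<ge> 0 \<Longrightarrow> \<bar>P r - P_lim\<bar> \<le> 2 * K"
    using indefinite_integral_decaying[OF cont_cos bound_cos] unfolding P_def[abs_def] by blast
  obtain Q_lim where cont_Q: "continuous_on {0..} Q"
    and dQ: "\<And>r. r > 0 \<Longrightarrow> (Q has_real_derivative sin (k * r) * g r) (at r)"
    and Q_lim: "\<And>r. r \<ge> 0 \<Longrightarrow> \<bar>Q r - Q_lim\<bar> \<le> K * (pi / 2 - arctan r)"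
      "\<And>r. r \<ge> 0 \<Longrightarrow> \<bar>Q r - Q_lim\<bar> \<le> 2 * K"
    using indefinite_integral_decaying[OF cont_sin bound_sin] unfolding Q_def[abs_def] by blast
  have "K \<ge> 0" using bound[of 0] by simp
  have Q_lim_bound: "\<bar>Q_lim\<bar> \<le> 2 * K" using Q_lim(2)[of 0] by (simp add: Q_def)
  define c where "c = - Q_lim"
  define u where "u r = (sin (k * r) * (P r - P_lim) - cos (k * r) * (Q r - Q_lim) + c * cos (k * r)) / k" for r
  define u' where "u' r = cos (k * r) * (P r - P_lim) + sin (k * r) * (Q r - Q_lim) - c * sin (k * r)" for r
  show thesis
  proof
    fix r :: real assume "r > 0"
    show "(u has_real_derivative u' r) (at r)"
      unfolding u_def u'_def using \<open>k > 0\<close>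
      by (auto intro!: derivative_eq_intros dP[OF \<open>r > 0\<close>] dQ[OF \<open>r > 0\<close>] simp: field_simps)
    show "(u' has_real_derivative g r - k\<^sup>2 * u r) (at r)"
      unfolding u'_def u_def using \<open>k > 0\<close>
      by (auto intro!: derivative_eq_intros dP[OF \<open>r > 0\<close>] dQ[OF \<open>r > 0\<close>]
          simp: field_simps power2_eq_square[symmetric] sin_squared_eq)
        (simp add: power2_eq_square algebra_simps)
  next
    show "u 0 = 0" by (simp add: u_def c_def P_def Q_def)
    show "continuous_on {0..} u" "continuous_on {0..} u'"
      unfolding u_def u'_def by (intro continuous_intros cont_P cont_Q; use \<open>k > 0\<close> in simp)+
    show "\<bar>c\<bar> \<le> 2 * K" using Q_lim_bound by (simp add: c_def)
  next
    fix r :: real assume "r \<ge> 0"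
    have "\<bar>sin (k * r) * (P r - P_lim) - cos (k * r) * (Q r - Q_lim) + c * cos (k * r)\<bar> \<le> 6 * K"
      using abs_sin_mult_le[of "k * r" "P r - P_lim"] abs_cos_mult_le[of "k * r" "Q r - Q_lim"]
        abs_cos_mult_le[of "k * r" c] P_lim(2)[OF \<open>r \<ge> 0\<close>] Q_lim(2)[OF \<open>r \<ge> 0\<close>] Q_lim_bound
      by (simp add: c_def mult.commute) arith
    then show "\<bar>u r\<bar> \<le> 6 * K / k" using \<open>k > 0\<close> by (simp add: u_def abs_divide divide_right_mono)
    show "\<bar>u' r\<bar> \<le> 6 * K"
      using abs_cos_mult_le[of "k * r" "P r - P_lim"] abs_sin_mult_le[of "k * r" "Q r - Q_lim"]
        abs_sin_mult_le[of "k * r" c] P_lim(2)[OF \<open>r \<ge> 0\<close>] Q_lim(2)[OF \<open>r \<ge> 0\<close>] Q_lim_bound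
      unfolding u'_def by (simp add: c_def mult.commute) arith
  next
    fix r :: real assume "r > 0"
    have "\<bar>sin (k * r) * (P r - P_lim) - cos (k * r) * (Q r - Q_lim)\<bar> \<le> 2 * (K * (pi / 2 - arctan r))"
      using abs_sin_mult_le[of "k * r" "P r - P_lim"] abs_cos_mult_le[of "k * r" "Q r - Q_lim"]
        P_lim(1)[of r] Q_lim(1)[of r] \<open>r > 0\<close> by arith
    also have "\<dots> \<le> 2 * (K * (1 / r))"
      using pi_half_minus_arctan_le[OF \<open>r > 0\<close>] \<open>K \<ge> 0\<close> by (intro mult_left_mono) auto
    finally show "\<bar>u r - c * cos (k * r) / k\<bar> \<le> 2 * K / (k * r)"
      using \<open>k > 0\<close> \<open>r > 0\<close> by (simp add: u_def diff_divide_distrib[symmetric] abs_divide field_simps)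
  qed
qed

section \<open>The leading-order corrector\<close>

lemma abs_quadratic_trig_le:
  fixes k1 k2 k3 t :: real
  shows "\<bar>k1 * (sin t)\<^sup>2 + k2 * (cos t)\<^sup>2 + k3 * sin t * cos t\<bar> \<le> \<bar>k1\<bar> + \<bar>k2\<bar> + \<bar>k3\<bar>"
proof -
  have "\<bar>sin t * cos t\<bar> \<le> 1"
    using mult_mono[OF abs_sin_le_one abs_cos_le_one] by (simp add: abs_mult)
  then have "\<bar>k1 * (sin t)\<^sup>2\<bar> \<le> \<bar>k1\<bar>" "\<bar>k2 * (cos t)\<^sup>2\<bar> \<le> \<bar>k2\<bar>" "\<bar>k3 * sin t * cos t\<bar> \<le> \<bar>k3\<bar>"
    by (simp_all add: abs_mult mult_right_le_one_le abs_square_le_1 mult.assoc)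
  then show ?thesis by linarith
qed

lemma trig_corrector:
  fixes k \<zeta> k1 k2 k3 C :: real
  assumes "k > 0" and k_sum: "\<bar>k1\<bar> + \<bar>k2\<bar> + \<bar>k3\<bar> \<le> C"
  obtains S S' S'' where
    "\<And>r. (S has_real_derivative S' r) (at r)" "\<And>r. (S' has_real_derivative S'' r) (at r)"
    "\<And>r. S'' r + k\<^sup>2 * S r = k1 * (sin (k * r - \<zeta>))\<^sup>2 + k2 * (cos (k * r - \<zeta>))\<^sup>2
                              + k3 * sin (k * r - \<zeta>) * cos (k * r - \<zeta>)"
    "\<And>r. \<bar>S r\<bar> \<le> C / k\<^sup>2" "\<And>r. \<bar>S' r\<bar> \<le> 2 * C / k"
proof -
  \<comment> \<open>In terms of the double angle the source is \<open>(k1 + k2)/2 + (k2 - k1)/2 cos 2\<theta> + k3/2 sin 2\<theta>\<close>.\<close>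
  define a0 where "a0 = (k1 + k2) / (2 * k\<^sup>2)"
  define a1 where "a1 = (k1 - k2) / (6 * k\<^sup>2)"
  define a2 where "a2 = - k3 / (6 * k\<^sup>2)"
  define \<theta> where "\<theta> r = k * r - \<zeta>" for r
  define S where "S r = a0 + a1 * cos (2 * \<theta> r) + a2 * sin (2 * \<theta> r)" for r
  define S' where "S' r = 2 * k * (a2 * cos (2 * \<theta> r) - a1 * sin (2 * \<theta> r))" for r
  define S'' where "S'' r = - 4 * k\<^sup>2 * (a1 * cos (2 * \<theta> r) + a2 * sin (2 * \<theta> r))" for r
  have k2: "k\<^sup>2 > 0" using \<open>k > 0\<close> by simp
  have a_sum: "\<bar>a0\<bar> + \<bar>a1\<bar> + \<bar>a2\<bar> \<le> C / k\<^sup>2"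
  proof -
    have "\<bar>a0\<bar> + \<bar>a1\<bar> + \<bar>a2\<bar> = (3 * \<bar>k1 + k2\<bar> + \<bar>k1 - k2\<bar> + \<bar>k3\<bar>) / (6 * k\<^sup>2)"
      using k2 by (simp add: a0_def a1_def a2_def abs_divide field_simps)
    also have "\<dots> \<le> 6 * C / (6 * k\<^sup>2)"
      using k2 k_sum abs_triangle_ineq[of k1 k2] abs_triangle_ineq4[of k1 k2]
        abs_ge_zero[of k1] abs_ge_zero[of k2] abs_ge_zero[of k3]
      by (intro divide_right_mono) linarith+
    finally show ?thesis by simp
  qed
  show thesis
  proof
    fix r
    show "(S has_real_derivative S' r) (at r)" "(S' has_real_derivative S'' r) (at r)"
      unfolding S_def S'_def S''_def \<theta>_def
      by (auto intro!: derivative_eq_intros simp: power2_eq_square algebra_simps)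
    have "S'' r + k\<^sup>2 * S r = (k1 + k2) / 2 + (k2 - k1) / 2 * cos (2 * \<theta> r) + k3 / 2 * sin (2 * \<theta> r)"
      using k2 by (simp add: S_def S''_def a0_def a1_def a2_def field_simps)
    also have "\<dots> = k1 * (sin (\<theta> r))\<^sup>2 + k2 * (cos (\<theta> r))\<^sup>2 + k3 * sin (\<theta> r) * cos (\<theta> r)"
      unfolding cos_double sin_double by (simp add: sin_squared_eq field_simps)
    finally show "S'' r + k\<^sup>2 * S r = k1 * (sin (k * r - \<zeta>))\<^sup>2 + k2 * (cos (k * r - \<zeta>))\<^sup>2
                              + k3 * sin (k * r - \<zeta>) * cos (k * r - \<zeta>)"
      by (simp add: \<theta>_def)
    have "\<bar>a1 * cos (2 * \<theta> r)\<bar> \<le> \<bar>a1\<bar>" "\<bar>a2 * sin (2 * \<theta> r)\<bar> \<le> \<bar>a2\<bar>"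
      "\<bar>a2 * cos (2 * \<theta> r)\<bar> \<le> \<bar>a2\<bar>" "\<bar>a1 * sin (2 * \<theta> r)\<bar> \<le> \<bar>a1\<bar>"
      by (simp_all add: abs_mult mult_right_le_one_le)
    then have "\<bar>S r\<bar> \<le> \<bar>a0\<bar> + \<bar>a1\<bar> + \<bar>a2\<bar>" "\<bar>a2 * cos (2 * \<theta> r) - a1 * sin (2 * \<theta> r)\<bar> \<le> \<bar>a0\<bar> + \<bar>a1\<bar> + \<bar>a2\<bar>"
      unfolding S_def by arith+
    moreover have "\<bar>S' r\<bar> = 2 * k * \<bar>a2 * cos (2 * \<theta> r) - a1 * sin (2 * \<theta> r)\<bar>"
      using \<open>k > 0\<close> by (simp add: S'_def abs_mult)
    ultimately have "\<bar>S r\<bar> \<le> \<bar>a0\<bar> + \<bar>a1\<bar> + \<bar>a2\<bar>" "\<bar>S' r\<bar> \<le> 2 * k * (\<bar>a0\<bar> + \<bar>a1\<bar> + \<bar>a2\<bar>)"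
      using \<open>k > 0\<close> by (simp_all add: mult_left_mono)
    then show "\<bar>S r\<bar> \<le> C / k\<^sup>2" "\<bar>S' r\<bar> \<le> 2 * C / k"
      using a_sum \<open>k > 0\<close> mult_left_mono[OF a_sum, of "2 * k"] by (auto simp: power2_eq_square)
  qed
qed

definition profile :: "real \<Rightarrow> real" where
  "profile r = r ^ 3 / (1 + r\<^sup>2)\<^sup>2"

lemma one_plus_square_pos [simp]: "1 + r\<^sup>2 > (0 :: real)"
  and one_plus_square_neq_zero [simp]: "1 + r\<^sup>2 \<noteq> (0 :: real)"
  by (simp_all add: add_pos_nonneg add_nonneg_eq_0_iff)

lemma abs_divide_power_le:
  fixes a c q :: real
  assumes "q > 0" and "\<bar>a\<bar> \<le> c * q ^ n"
  shows "\<bar>a / q ^ Suc n\<bar> \<le> c / q"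
proof -
  have "\<bar>a / q ^ Suc n\<bar> = \<bar>a\<bar> / q ^ Suc n" using assms by (simp add: abs_divide)
  also have "\<dots> \<le> c * q ^ n / q ^ Suc n"
    using assms by (intro divide_right_mono) auto
  also have "\<dots> = c / q" using assms by simp
  finally show ?thesis .
qed

lemma profile_has_derivative:
  "(profile has_real_derivative (3 * r\<^sup>2 - r ^ 4) / (1 + r\<^sup>2) ^ 3) (at r)"
  unfolding profile_def
  by (rule derivative_eq_intros refl | simp)+ (simp add: divide_simps; simp add: algebra_simps eval_nat_numeral)

lemma profile_second_derivative:
  "((\<lambda>r. (3 * r\<^sup>2 - r ^ 4) / (1 + r\<^sup>2) ^ 3) has_real_derivative
     (6 * r - 16 * r ^ 3 + 2 * r ^ 5) / (1 + r\<^sup>2) ^ 4) (at r)"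
  by (rule derivative_eq_intros refl | simp)+ (simp add: divide_simps; simp add: algebra_simps eval_nat_numeral)

lemma profile_bounds:
  fixes r :: real
  assumes "r \<ge> 0"
  shows "0 \<le> profile r" "profile r \<le> r / (1 + r\<^sup>2)" "profile r \<le> 1"
    "\<bar>(3 * r\<^sup>2 - r ^ 4) / (1 + r\<^sup>2) ^ 3\<bar> \<le> 3 / (1 + r\<^sup>2)"
    "\<bar>(6 * r - 16 * r ^ 3 + 2 * r ^ 5) / (1 + r\<^sup>2) ^ 4\<bar> \<le> 4 / (1 + r\<^sup>2)"
proof -
  have eq: "profile r = r / (1 + r\<^sup>2) * (r\<^sup>2 / (1 + r\<^sup>2))"
    by (simp add: profile_def power2_eq_square power3_eq_cube)
  have factors: "0 \<le> r / (1 + r\<^sup>2)" "0 \<le> r\<^sup>2 / (1 + r\<^sup>2)" "r\<^sup>2 / (1 + r\<^sup>2) \<le> 1"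
    using assms by simp_all
  show "0 \<le> profile r" unfolding eq by (rule mult_nonneg_nonneg) (use factors in simp_all)
  show "profile r \<le> r / (1 + r\<^sup>2)" unfolding eq by (rule mult_right_le_one_le) (use factors in simp_all)
  moreover have "r \<le> 1 + r\<^sup>2"
    using assms sum_squares_ge_zero[of "r - 1" 0] by (simp add: algebra_simps power2_eq_square)
  then have "r / (1 + r\<^sup>2) \<le> 1" by (simp add: divide_le_eq)
  ultimately show "profile r \<le> 1" by linarith
  define q where "q = 1 + r\<^sup>2"
  have r_powers: "0 \<le> r ^ n" for n using assms by simp
  have "3 * q\<^sup>2 - (3 * r\<^sup>2 - r ^ 4) = 3 + 3 * r\<^sup>2 + 4 * r ^ 4"
    "3 * q\<^sup>2 + (3 * r\<^sup>2 - r ^ 4) = 3 + 9 * r\<^sup>2 + 2 * r ^ 4"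
    unfolding q_def by algebra+
  then have "\<bar>3 * r\<^sup>2 - r ^ 4\<bar> \<le> 3 * q\<^sup>2"
    unfolding abs_le_iff using r_powers[of 2] r_powers[of 4] by linarith
  then show "\<bar>(3 * r\<^sup>2 - r ^ 4) / (1 + r\<^sup>2) ^ 3\<bar> \<le> 3 / (1 + r\<^sup>2)"
    using abs_divide_power_le[of "1 + r\<^sup>2" _ 3 2] by (simp add: q_def)
  have "4 * q ^ 3 - (6 * r - 16 * r ^ 3 + 2 * r ^ 5)
      = 3 * (r - 1)\<^sup>2 + r ^ 4 * (r - 1)\<^sup>2 + (1 + 9 * r\<^sup>2 + 16 * r ^ 3 + 11 * r ^ 4 + 3 * r ^ 6)"
    "4 * q ^ 3 + (6 * r - 16 * r ^ 3 + 2 * r ^ 5)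
      = 8 * (r\<^sup>2 * (r - 1)\<^sup>2) + (4 + 6 * r + 4 * r\<^sup>2 + 4 * r ^ 4 + 2 * r ^ 5 + 4 * r ^ 6)"
    unfolding q_def by algebra+
  moreover have "0 \<le> (r - 1)\<^sup>2" "0 \<le> r ^ 4 * (r - 1)\<^sup>2" "0 \<le> r\<^sup>2 * (r - 1)\<^sup>2" by simp_all
  ultimately have "6 * r - 16 * r ^ 3 + 2 * r ^ 5 \<le> 4 * q ^ 3" "- (6 * r - 16 * r ^ 3 + 2 * r ^ 5) \<le> 4 * q ^ 3"
    using assms r_powers[of 2] r_powers[of 3] r_powers[of 4] r_powers[of 5] r_powers[of 6]
    by linarith+
  then have "\<bar>6 * r - 16 * r ^ 3 + 2 * r ^ 5\<bar> \<le> 4 * q ^ 3" by (simp only: abs_le_iff)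
  then show "\<bar>(6 * r - 16 * r ^ 3 + 2 * r ^ 5) / (1 + r\<^sup>2) ^ 4\<bar> \<le> 4 / (1 + r\<^sup>2)"
    using abs_divide_power_le[of "1 + r\<^sup>2" _ 4 3] by (simp add: q_def)
qed

lemma profile_approx_inverse:
  fixes r :: real
  assumes "r \<ge> 1"
  shows "\<bar>1 / r - profile r\<bar> \<le> 2 / (1 + r\<^sup>2)"
proof -
  define q where "q = 1 + r\<^sup>2"
  have "q > 0" "r > 0" using assms by (simp_all add: q_def)
  have "q\<^sup>2 - r ^ 4 = 1 + 2 * r\<^sup>2"
    by (simp add: q_def algebra_simps power2_eq_square power4_eq_xxxx)
  moreover have "1 / r - profile r = (q\<^sup>2 - r ^ 4) / (r * q\<^sup>2)"
    unfolding profile_def q_def[symmetric]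
    using \<open>q > 0\<close> \<open>r > 0\<close> by (simp add: field_simps eval_nat_numeral)
  moreover have "1 + 2 * r\<^sup>2 \<le> 2 * r * q"
  proof -
    have "r * r \<le> r * (r * r)" using assms mult_left_mono[of 1 r "r * r"] by simp
    moreover have "2 * r * q = 2 * r + 2 * (r * (r * r))" "r\<^sup>2 = r * r"
      by (simp_all add: q_def power2_eq_square algebra_simps)
    ultimately show ?thesis using assms by linarith
  qed
  then have "(1 + 2 * r\<^sup>2) / (r * q\<^sup>2) \<le> 2 * r * q / (r * q\<^sup>2)"
    using \<open>q > 0\<close> \<open>r > 0\<close> by (intro divide_right_mono) auto
  moreover have "2 * r * q / (r * q\<^sup>2) = 2 / q"
    using \<open>q > 0\<close> \<open>r > 0\<close> by (simp add: power2_eq_square)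
  moreover have "0 \<le> 1 + 2 * r\<^sup>2" by simp
  ultimately show ?thesis
    using \<open>q > 0\<close> \<open>r > 0\<close> by (simp add: q_def)
qed

lemma cutoff_minus_profile_bound:
  fixes \<rho> :: "real \<Rightarrow> real" and M s :: real
  assumes "s \<ge> 0" and \<rho>_one: "\<forall>r>2. \<rho> r = 1" and \<rho>_zero: "\<forall>r<1. \<rho> r = 0"
    and M: "\<And>r. 1 \<le> r \<Longrightarrow> r \<le> 2 \<Longrightarrow> \<bar>\<rho> r\<bar> \<le> M"
  shows "\<bar>s * (\<rho> s * inverse (s\<^sup>2)) - profile s\<bar> \<le> 5 * (M + 1) / (1 + s\<^sup>2)"
proof -
  have "M \<ge> 0" using M[of 1] by simp
  consider "s < 1" | "1 \<le> s" "s \<le> 2" | "s > 2" by linarith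
  then show ?thesis
  proof cases
    case 1
    then have "\<bar>s * (\<rho> s * inverse (s\<^sup>2)) - profile s\<bar> \<le> s / (1 + s\<^sup>2)"
      using \<rho>_zero profile_bounds[OF \<open>s \<ge> 0\<close>] by simp
    also have "\<dots> \<le> 5 * (M + 1) / (1 + s\<^sup>2)"
      using 1 \<open>M \<ge> 0\<close> by (intro divide_right_mono) auto
    finally show ?thesis .
  next
    case 2
    have "\<bar>s * (\<rho> s * inverse (s\<^sup>2))\<bar> = \<bar>\<rho> s\<bar> / s"
      using 2 by (simp add: abs_mult power2_eq_square field_simps)
    also have "\<dots> \<le> \<bar>\<rho> s\<bar>" using 2 by (simp add: divide_le_eq mult_le_cancel_left1)
    also have "\<dots> \<le> M" using M[OF 2] .
    finally have "\<bar>s * (\<rho> s * inverse (s\<^sup>2)) - profile s\<bar> \<le> M + 1"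
      using profile_bounds[OF \<open>s \<ge> 0\<close>] by linarith
    also have "\<dots> \<le> 5 * (M + 1) / (1 + s\<^sup>2)"
    proof -
      have "s\<^sup>2 \<le> 2\<^sup>2" using 2 by (intro power_mono) auto
      then have "(M + 1) * (1 + s\<^sup>2) \<le> (M + 1) * 5" using \<open>M \<ge> 0\<close> by (intro mult_left_mono) auto
      then show ?thesis by (simp add: le_divide_eq mult.commute)
    qed
    finally show ?thesis .
  next
    case 3
    then have "s * (\<rho> s * inverse (s\<^sup>2)) = 1 / s" using \<rho>_one by (simp add: power2_eq_square field_simps)
    then have "\<bar>s * (\<rho> s * inverse (s\<^sup>2)) - profile s\<bar> \<le> 2 / (1 + s\<^sup>2)"
      using 3 profile_approx_inverse[of s] by simp
    also have "\<dots> \<le> 5 * (M + 1) / (1 + s\<^sup>2)"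
      using \<open>M \<ge> 0\<close> by (intro divide_right_mono) auto
    finally show ?thesis .
  qed
qed

lemma cubic_decay_times_id:
  fixes s e C :: real
  assumes "s \<ge> 0" and "\<bar>e\<bar> \<le> C / (1 + s) ^ 3"
  shows "\<bar>s * e\<bar> \<le> C / (1 + s\<^sup>2)"
proof -
  have "C \<ge> 0"
    using assms order_trans[OF abs_ge_zero assms(2)] by (simp add: zero_le_divide_iff)
  have "s * (1 + s\<^sup>2) \<le> (1 + s) ^ 3"
    using assms by (simp add: power2_eq_square power3_eq_cube algebra_simps)
  then have "s / (1 + s) ^ 3 \<le> 1 / (1 + s\<^sup>2)"
    using assms by (simp add: divide_simps)
  then have "s * (C / (1 + s) ^ 3) \<le> C / (1 + s\<^sup>2)"
    using \<open>C \<ge> 0\<close> mult_left_mono[of "s / (1 + s) ^ 3" "1 / (1 + s\<^sup>2)" C] by (simp add: mult.commute)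
  moreover have "\<bar>s * e\<bar> \<le> s * (C / (1 + s) ^ 3)"
    using assms by (simp add: abs_mult mult_left_mono del: times_divide_eq_right)
  ultimately show ?thesis by linarith
qed

lemma profile_product:
  fixes S S' S'' :: "real \<Rightarrow> real" and a b :: real
  assumes dS: "\<And>r. (S has_real_derivative S' r) (at r)" and dS': "\<And>r. (S' has_real_derivative S'' r) (at r)"
    and bound: "\<And>r. \<bar>S r\<bar> \<le> a" "\<And>r. \<bar>S' r\<bar> \<le> b"
  obtains w' E where
    "\<And>r. ((\<lambda>r. profile r * S r) has_real_derivative w' r) (at r)"
    "\<And>r. (w' has_real_derivative profile r * S'' r + E r) (at r)"
    "continuous_on UNIV E" "\<And>r. r \<ge> 0 \<Longrightarrow> \<bar>E r\<bar> \<le> (4 * a + 6 * b) / (1 + r\<^sup>2)"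
    "\<And>r. r \<ge> 0 \<Longrightarrow> \<bar>w' r\<bar> \<le> 3 * a + b"
proof -
  define \<phi>' where "\<phi>' r = (3 * r\<^sup>2 - r ^ 4) / (1 + r\<^sup>2) ^ 3" for r :: real
  define \<phi>'' where "\<phi>'' r = (6 * r - 16 * r ^ 3 + 2 * r ^ 5) / (1 + r\<^sup>2) ^ 4" for r :: real
  have d\<phi>: "(profile has_real_derivative \<phi>' r) (at r)" for r
    unfolding \<phi>'_def by (rule profile_has_derivative)
  have d\<phi>': "(\<phi>' has_real_derivative \<phi>'' r) (at r)" for r
    unfolding \<phi>'_def[abs_def] \<phi>''_def by (rule profile_second_derivative)
  have "a \<ge> 0" "b \<ge> 0" using bound[of 0] by (auto intro: order_trans)
  show thesis
  proof
    fix r :: real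
    show "((\<lambda>r. profile r * S r) has_real_derivative \<phi>' r * S r + profile r * S' r) (at r)"
      by (rule derivative_eq_intros d\<phi> dS refl)+ simp
    show "((\<lambda>r. \<phi>' r * S r + profile r * S' r) has_real_derivative
        profile r * S'' r + (\<phi>'' r * S r + 2 * (\<phi>' r * S' r))) (at r)"
      by (rule derivative_eq_intros d\<phi> d\<phi>' dS dS' refl)+ (simp add: algebra_simps)
  next
    have "continuous_on UNIV \<phi>''" unfolding \<phi>''_def by (intro continuous_intros) simp
    moreover have "continuous_on UNIV \<phi>'" "continuous_on UNIV S" "continuous_on UNIV S'"
      by (intro continuous_at_imp_continuous_on ballI DERIV_isCont[OF d\<phi>'] DERIV_isCont[OF dS]
          DERIV_isCont[OF dS'])+
    ultimately show "continuous_on UNIV (\<lambda>r. \<phi>'' r * S r + 2 * (\<phi>' r * S' r))"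
      by (intro continuous_intros)
  next
    fix r :: real assume "r \<ge> 0"
    note profile = profile_bounds[OF \<open>r \<ge> 0\<close>, folded \<phi>'_def \<phi>''_def]
    have "\<bar>\<phi>'' r * S r\<bar> \<le> 4 / (1 + r\<^sup>2) * a" "\<bar>\<phi>' r * S' r\<bar> \<le> 3 / (1 + r\<^sup>2) * b"
      unfolding abs_mult using profile bound by (intro mult_mono; simp)+
    then show "\<bar>\<phi>'' r * S r + 2 * (\<phi>' r * S' r)\<bar> \<le> (4 * a + 6 * b) / (1 + r\<^sup>2)"
      by (simp add: add_divide_distrib)
    have "\<bar>\<phi>' r * S r\<bar> \<le> 3 * a" "\<bar>profile r * S' r\<bar> \<le> 1 * b"
      unfolding abs_mult using profile bound order_trans[OF profile(4)] \<open>a \<ge> 0\<close>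
      by (intro mult_mono; simp add: divide_le_eq)+
    then show "\<bar>\<phi>' r * S r + profile r * S' r\<bar> \<le> 3 * a + b" by linarith
  qed
qed

lemma continuous_on_cutoff_inverse_square:
  fixes \<rho> :: "real \<Rightarrow> real"
  assumes "continuous_on UNIV \<rho>" and "\<forall>r<1. \<rho> r = 0"
  shows "continuous_on UNIV (\<lambda>r. \<rho> r * inverse (r\<^sup>2))"
proof -
  \<comment> \<open>The cutoff vanishes where \<open>r\<^sup>2 < 1\<close>, so the singularity of \<open>r\<^sup>-\<^sup>2\<close> is never seen.\<close>
  have "(\<lambda>r. \<rho> r * inverse (r\<^sup>2)) = (\<lambda>r. \<rho> r * inverse (max (r\<^sup>2) 1))"
  proof
    fix r :: real
    show "\<rho> r * inverse (r\<^sup>2) = \<rho> r * inverse (max (r\<^sup>2) 1)"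
      using assms(2) abs_square_less_1[of r] by (cases "r\<^sup>2 < 1") auto
  qed
  then show ?thesis by (simp only:) (intro continuous_intros assms(1); auto simp: max_def)
qed

lemma leading_order_corrector:
  fixes k C M \<zeta> k1 k2 k3 :: real and \<rho> \<eta>b \<eta> :: "real \<Rightarrow> real"
  defines "K \<equiv> C + 5 * (M + 1) * C + 12 * C / k + 4 * C / k\<^sup>2"
  assumes "k > 0" and k_sum: "\<bar>k1\<bar> + \<bar>k2\<bar> + \<bar>k3\<bar> \<le> C"
    and \<rho>_cont: "continuous_on UNIV \<rho>" and \<rho>_one: "\<forall>r>2. \<rho> r = 1" and \<rho>_zero: "\<forall>r<1. \<rho> r = 0"
    and M: "\<And>r. 1 \<le> r \<Longrightarrow> r \<le> 2 \<Longrightarrow> \<bar>\<rho> r\<bar> \<le> M"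
    and \<eta>b_cont: "continuous_on {0..} \<eta>b" and \<eta>b_bound: "\<And>r. r \<ge> 0 \<Longrightarrow> \<bar>\<eta>b r\<bar> \<le> C / (1 + r) ^ 3"
    and \<eta>: "\<And>r. \<eta> r = \<rho> r * inverse (r\<^sup>2) * (k1 * (sin (k * r - \<zeta>))\<^sup>2 + k2 * (cos (k * r - \<zeta>))\<^sup>2
                          + k3 * sin (k * r - \<zeta>) * cos (k * r - \<zeta>)) + \<eta>b r"
  obtains w w' w'' where
    "\<And>r. (w has_real_derivative w' r) (at r)" "\<And>r. (w' has_real_derivative w'' r) (at r)"
    "continuous_on {0..} (\<lambda>r. r * \<eta> r - (w'' r + k\<^sup>2 * w r))"
    "\<And>r. r \<ge> 0 \<Longrightarrow> \<bar>r * \<eta> r - (w'' r + k\<^sup>2 * w r)\<bar> \<le> K / (1 + r\<^sup>2)"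
    "\<And>r. r \<ge> 0 \<Longrightarrow> \<bar>w r\<bar> \<le> C / k\<^sup>2 * (r / (1 + r\<^sup>2))"
    "\<And>r. r \<ge> 0 \<Longrightarrow> \<bar>w' r\<bar> \<le> 3 * C / k\<^sup>2 + 2 * C / k"
    "\<And>r. r \<ge> 0 \<Longrightarrow> \<bar>w'' r\<bar> \<le> 4 * C / k\<^sup>2 + 12 * C / k + 2 * C"
proof -
  define T where "T r = k1 * (sin (k * r - \<zeta>))\<^sup>2 + k2 * (cos (k * r - \<zeta>))\<^sup>2
                          + k3 * sin (k * r - \<zeta>) * cos (k * r - \<zeta>)" for r
  have T_bound: "\<bar>T r\<bar> \<le> C" for r
    unfolding T_def using abs_quadratic_trig_le k_sum by (rule order_trans)
  obtain S S' S'' where dS: "\<And>r. (S has_real_derivative S' r) (at r)"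
    and dS': "\<And>r. (S' has_real_derivative S'' r) (at r)"
    and S_eq: "\<And>r. S'' r + k\<^sup>2 * S r = T r"
    and S_bound: "\<And>r. \<bar>S r\<bar> \<le> C / k\<^sup>2" "\<And>r. \<bar>S' r\<bar> \<le> 2 * C / k"
    using trig_corrector[OF \<open>k > 0\<close> k_sum, of \<zeta>] unfolding T_def by metis
  obtain w' E where dw: "\<And>r. ((\<lambda>r. profile r * S r) has_real_derivative w' r) (at r)"
    and dw': "\<And>r. (w' has_real_derivative profile r * S'' r + E r) (at r)"
    and E: "continuous_on UNIV E" "\<And>r. r \<ge> 0 \<Longrightarrow> \<bar>E r\<bar> \<le> (4 * (C / k\<^sup>2) + 6 * (2 * C / k)) / (1 + r\<^sup>2)"
    and w'_bound: "\<And>r. r \<ge> 0 \<Longrightarrow> \<bar>w' r\<bar> \<le> 3 * (C / k\<^sup>2) + 2 * C / k"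
    using profile_product[OF dS dS' S_bound] by blast
  define c where "c r = \<rho> r * inverse (r\<^sup>2)" for r
  have residual: "r * \<eta> r - ((profile r * S'' r + E r) + k\<^sup>2 * (profile r * S r))
      = r * \<eta>b r + (r * c r - profile r) * T r - E r" for r
  proof -
    have "profile r * S'' r + k\<^sup>2 * (profile r * S r) = profile r * T r"
      by (simp add: S_eq[symmetric] algebra_simps)
    moreover have "\<eta> r = c r * T r + \<eta>b r" by (simp add: \<eta> T_def c_def)
    ultimately show ?thesis by (simp add: algebra_simps)
  qed
  show thesis
  proof
    show "continuous_on {0..} (\<lambda>r. r * \<eta> r - ((profile r * S'' r + E r) + k\<^sup>2 * (profile r * S r)))"
    proof -
      have c_cont: "continuous_on UNIV c"
        unfolding c_def[abs_def] by (rule continuous_on_cutoff_inverse_square[OF \<rho>_cont \<rho>_zero])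
      have profile_cont: "continuous_on UNIV profile"
        by (intro continuous_at_imp_continuous_on ballI DERIV_isCont[OF profile_has_derivative])
      show ?thesis
        unfolding residual T_def
        by (intro continuous_intros \<eta>b_cont continuous_on_subset[OF E(1)]
            continuous_on_subset[OF profile_cont] continuous_on_subset[OF c_cont]) auto
    qed
  next
    fix r :: real assume "r \<ge> 0"
    have "\<bar>r * \<eta>b r\<bar> \<le> C / (1 + r\<^sup>2)" using cubic_decay_times_id \<eta>b_bound \<open>r \<ge> 0\<close> by blast
    moreover have "\<bar>(r * c r - profile r) * T r\<bar> \<le> 5 * (M + 1) / (1 + r\<^sup>2) * C"
      unfolding abs_mult c_def using T_bound cutoff_minus_profile_bound[OF \<open>r \<ge> 0\<close> \<rho>_one \<rho>_zero M]
      by (intro mult_mono) auto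
    ultimately have "\<bar>r * \<eta>b r + (r * c r - profile r) * T r - E r\<bar>
        \<le> C / (1 + r\<^sup>2) + 5 * (M + 1) / (1 + r\<^sup>2) * C + (4 * (C / k\<^sup>2) + 6 * (2 * C / k)) / (1 + r\<^sup>2)"
      using E(2)[OF \<open>r \<ge> 0\<close>] by arith
    also have "\<dots> = K / (1 + r\<^sup>2)"
      by (simp add: K_def add_divide_distrib algebra_simps)
    finally show "\<bar>r * \<eta> r - ((profile r * S'' r + E r) + k\<^sup>2 * (profile r * S r))\<bar> \<le> K / (1 + r\<^sup>2)"
      unfolding residual .
    have "\<bar>profile r\<bar> * \<bar>S r\<bar> \<le> r / (1 + r\<^sup>2) * (C / k\<^sup>2)"
      using profile_bounds[OF \<open>r \<ge> 0\<close>] S_bound(1)[of r] \<open>r \<ge> 0\<close> by (intro mult_mono) auto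
    then show "\<bar>profile r * S r\<bar> \<le> C / k\<^sup>2 * (r / (1 + r\<^sup>2))"
      by (simp add: abs_mult mult.commute)
    show "\<bar>w' r\<bar> \<le> 3 * C / k\<^sup>2 + 2 * C / k" using w'_bound[OF \<open>r \<ge> 0\<close>] by simp
    have "\<bar>S'' r\<bar> \<le> 2 * C"
      using S_eq[of r] T_bound[of r] S_bound(1)[of r] \<open>k > 0\<close> by (simp add: field_simps abs_le_iff)
    then have "\<bar>profile r\<bar> * \<bar>S'' r\<bar> \<le> 1 * (2 * C)"
      using profile_bounds[OF \<open>r \<ge> 0\<close>] by (intro mult_mono) auto
    then have "\<bar>profile r * S'' r\<bar> \<le> 2 * C" by (simp add: abs_mult)
    moreover have "(4 * (C / k\<^sup>2) + 6 * (2 * C / k)) / (1 + r\<^sup>2) \<le> (4 * (C / k\<^sup>2) + 6 * (2 * C / k)) / 1"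
      using k_sum \<open>k > 0\<close> by (intro divide_left_mono) auto
    ultimately show "\<bar>profile r * S'' r + E r\<bar> \<le> 4 * C / k\<^sup>2 + 12 * C / k + 2 * C"
      using E(2)[OF \<open>r \<ge> 0\<close>] by simp
  qed (rule dw dw')+
qed

section \<open>Construction of the solution\<close>

lemma sine_mode_remainder_bound:
  fixes k \<zeta> c K B r W U :: real
  assumes "k > 0" and "cos \<zeta> = 0" and "K \<ge> 0" and "r > 1"
    and w: "\<bar>W\<bar> \<le> B * (r / (1 + r\<^sup>2))"
    and u: "\<bar>U - c * cos (k * r) / k\<bar> \<le> 2 * K / (k * r)"
  shows "\<bar>(W + U) / r - (- c * sin \<zeta> / k) * sin (k * r - \<zeta>) / r\<bar>
      \<le> (2 * B + 8 * K / k) * (1 + r) powr (-2)"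
proof -
  have "r > 0" using \<open>r > 1\<close> by simp
  have "0 \<le> B * (r / (1 + r\<^sup>2))" using w by (rule order_trans[OF abs_ge_zero])
  moreover have "r / (1 + r\<^sup>2) > 0" using \<open>r > 0\<close> by simp
  ultimately have "B \<ge> 0" by (simp add: zero_le_mult_iff del: times_divide_eq_right)
  \<comment> \<open>As \<open>cos \<zeta> = 0\<close>, \<open>sin (k r - \<zeta>) = - sin \<zeta> cos (k r)\<close> and \<open>sin\<^sup>2 \<zeta> = 1\<close>.\<close>
  have "(- c * sin \<zeta> / k) * sin (k * r - \<zeta>) = c * cos (k * r) / k"
    using \<open>cos \<zeta> = 0\<close> sin_cos_squared_add[of \<zeta>] by (simp add: sin_diff power2_eq_square algebra_simps)
  then have "(W + U) / r - (- c * sin \<zeta> / k) * sin (k * r - \<zeta>) / r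
      = (W + (U - c * cos (k * r) / k)) / r"
    by (simp add: diff_divide_distrib add_divide_distrib)
  then have "\<bar>(W + U) / r - (- c * sin \<zeta> / k) * sin (k * r - \<zeta>) / r\<bar>
      = \<bar>W + (U - c * cos (k * r) / k)\<bar> / r"
    using \<open>r > 0\<close> by (simp add: abs_divide)
  also have "\<dots> \<le> (B * (r / (1 + r\<^sup>2)) + 2 * K / (k * r)) / r"
    using w u \<open>r > 0\<close> by (intro divide_right_mono) (auto intro: abs_triangle_ineq[THEN order_trans])
  also have "\<dots> = B / (1 + r\<^sup>2) + 2 * K / k / r\<^sup>2"
    using \<open>r > 0\<close> \<open>k > 0\<close> by (simp add: field_simps power2_eq_square)
  also have "\<dots> \<le> B * (2 / (1 + r)\<^sup>2) + 2 * K / k * (4 / (1 + r)\<^sup>2)"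
  proof (intro add_mono)
    have "(1 + r)\<^sup>2 \<le> 2 * (1 + r\<^sup>2)"
      using sum_squares_ge_zero[of "r - 1" 0] by (simp add: power2_eq_square algebra_simps)
    then have "B * (1 + r)\<^sup>2 \<le> B * (2 * (1 + r\<^sup>2))" using \<open>B \<ge> 0\<close> by (rule mult_left_mono)
    then show "B / (1 + r\<^sup>2) \<le> B * (2 / (1 + r)\<^sup>2)"
      using \<open>r > 0\<close> by (simp add: divide_simps mult_ac)
    have "(1 + r)\<^sup>2 \<le> (2 * r)\<^sup>2" using \<open>r > 1\<close> by (intro power_mono) auto
    then have "K * (1 + r)\<^sup>2 \<le> K * (4 * r\<^sup>2)" using \<open>K \<ge> 0\<close> by (intro mult_left_mono) (auto simp: power_mult_distrib)
    then show "2 * K / k / r\<^sup>2 \<le> 2 * K / k * (4 / (1 + r)\<^sup>2)"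
      using \<open>k > 0\<close> \<open>r > 0\<close> by (simp add: divide_simps mult_ac)
  qed
  also have "\<dots> = (2 * B + 8 * K / k) * (1 + r) powr (-2)"
    using \<open>r > 0\<close> by (simp add: powr_minus powr_realpow divide_inverse algebra_simps)
  finally show ?thesis .
qed

lemma radial_solution_construction:
  fixes lam \<zeta> C M \<alpha> k1 k2 k3 :: real and \<rho> \<eta>b \<eta> :: "real \<Rightarrow> real"
  defines "K \<equiv> C + 5 * (M + 1) * C + 12 * C / sqrt lam + 4 * C / lam"
  assumes "lam > 0" and "cos \<zeta> = 0" and "0 < \<alpha>" "\<alpha> \<le> 1" and k_sum: "\<bar>k1\<bar> + \<bar>k2\<bar> + \<bar>k3\<bar> \<le> C"
    and \<rho>_cont: "continuous_on UNIV \<rho>" and \<rho>_one: "\<forall>r>2. \<rho> r = 1" and \<rho>_zero: "\<forall>r<1. \<rho> r = 0"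
    and M: "\<And>r. 1 \<le> r \<Longrightarrow> r \<le> 2 \<Longrightarrow> \<bar>\<rho> r\<bar> \<le> M"
    and \<eta>b_cont: "continuous_on {0..} \<eta>b" and \<eta>b_bound: "\<And>r. r \<ge> 0 \<Longrightarrow> \<bar>\<eta>b r\<bar> \<le> C / (1 + r) ^ 3"
    and \<eta>: "\<And>r. \<eta> r = \<rho> r * inverse (r\<^sup>2) * (k1 * (sin (sqrt lam * r - \<zeta>))\<^sup>2
            + k2 * (cos (sqrt lam * r - \<zeta>))\<^sup>2 + k3 * sin (sqrt lam * r - \<zeta>) * cos (sqrt lam * r - \<zeta>)) + \<eta>b r"
  shows "\<exists>h c1 hbar. solves_radial lam \<eta> h \<and> holder_norm \<alpha> {0..} h < \<infinity> \<and>
      (\<forall>r>1. h r = c1 * sin (sqrt lam * r - \<zeta>) / r + hbar r) \<and>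
      \<bar>c1\<bar> \<le> 2 * C / lam + 8 * K / sqrt lam \<and>
      (\<forall>r>1. \<bar>hbar r\<bar> \<le> (2 * C / lam + 8 * K / sqrt lam) * (1 + r) powr (-2))"
proof -
  define k where "k = sqrt lam"
  have "k > 0" "k\<^sup>2 = lam" using \<open>lam > 0\<close> by (simp_all add: k_def)
  have "C \<ge> 0" using k_sum by linarith
  obtain w w' w'' where dw: "\<And>r. (w has_real_derivative w' r) (at r)"
    and dw': "\<And>r. (w' has_real_derivative w'' r) (at r)"
    and g_cont: "continuous_on {0..} (\<lambda>r. r * \<eta> r - (w'' r + k\<^sup>2 * w r))"
    and g_bound: "\<And>r. r \<ge> 0 \<Longrightarrow> \<bar>r * \<eta> r - (w'' r + k\<^sup>2 * w r)\<bar> \<le> K / (1 + r\<^sup>2)"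
    and w_bound: "\<And>r. r \<ge> 0 \<Longrightarrow> \<bar>w r\<bar> \<le> C / k\<^sup>2 * (r / (1 + r\<^sup>2))"
    and w'_bound: "\<And>r. r \<ge> 0 \<Longrightarrow> \<bar>w' r\<bar> \<le> 3 * C / k\<^sup>2 + 2 * C / k"
    and w''_bound: "\<And>r. r \<ge> 0 \<Longrightarrow> \<bar>w'' r\<bar> \<le> 4 * C / k\<^sup>2 + 12 * C / k + 2 * C"
    using leading_order_corrector[OF \<open>k > 0\<close> k_sum \<rho>_cont \<rho>_one \<rho>_zero M \<eta>b_cont \<eta>b_bound, of \<eta> \<zeta>]
    by (auto simp: \<eta> k_def K_def \<open>k\<^sup>2 = lam\<close>[unfolded k_def])
  obtain u u' c where du: "\<And>r. r > 0 \<Longrightarrow> (u has_real_derivative u' r) (at r)"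
    and du': "\<And>r. r > 0 \<Longrightarrow> (u' has_real_derivative (r * \<eta> r - (w'' r + k\<^sup>2 * w r)) - k\<^sup>2 * u r) (at r)"
    and "u 0 = 0" and u_cont: "continuous_on {0..} u" "continuous_on {0..} u'"
    and u_bound: "\<And>r. r \<ge> 0 \<Longrightarrow> \<bar>u r\<bar> \<le> 6 * K / k" "\<And>r. r \<ge> 0 \<Longrightarrow> \<bar>u' r\<bar> \<le> 6 * K"
    and "\<bar>c\<bar> \<le> 2 * K" and u_tail: "\<And>r. r > 0 \<Longrightarrow> \<bar>u r - c * cos (k * r) / k\<bar> \<le> 2 * K / (k * r)"
    using oscillator_particular_solution[OF \<open>k > 0\<close> g_cont g_bound] by blast
  have "K \<ge> 0" using \<open>\<bar>c\<bar> \<le> 2 * K\<close> by linarith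
  define v where "v r = w r + u r" for r
  define v' where "v' r = w' r + u' r" for r
  have dv: "(v has_real_derivative v' r) (at r)" if "r > 0" for r
    unfolding v_def[abs_def] v'_def using dw du[OF that] by (rule DERIV_add)
  have dv': "(v' has_real_derivative r * \<eta> r - lam * v r) (at r)" if "r > 0" for r
    unfolding v'_def[abs_def] using DERIV_add[OF dw' du'[OF that]]
    by (simp add: v_def \<open>k\<^sup>2 = lam\<close> algebra_simps)
  define h where "h r = (if r = 0 then v' 0 else v r / r)" for r
  have "solves_radial lam \<eta> h"
    by (rule solves_radial_div_id[OF dv dv']) (auto simp: h_def)
  moreover have "holder_norm \<alpha> {0..} h < \<infinity>"
  proof -
    have w_cont: "continuous_on {0..} w" "continuous_on {0..} w'"
      by (intro continuous_at_imp_continuous_on ballI DERIV_isCont[OF dw] DERIV_isCont[OF dw'])+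
    have "continuous_on {0..} v" "continuous_on {0..} v'"
      unfolding v_def[abs_def] v'_def[abs_def] by (intro continuous_intros u_cont w_cont)+
    moreover have "v 0 = 0" using w_bound[of 0] \<open>u 0 = 0\<close> by (simp add: v_def)
    moreover have "\<bar>v r\<bar> \<le> C / k\<^sup>2 + 6 * K / k + (3 * C / k\<^sup>2 + 2 * C / k + 6 * K)"
      "\<bar>v' r\<bar> \<le> C / k\<^sup>2 + 6 * K / k + (3 * C / k\<^sup>2 + 2 * C / k + 6 * K)" if "r \<ge> 0" for r
    proof -
      have "r / (1 + r\<^sup>2) \<le> 1"
        using that sum_squares_ge_zero[of "r - 1" 0] by (simp add: divide_le_eq algebra_simps power2_eq_square)
      then have "\<bar>w r\<bar> \<le> C / k\<^sup>2"
        using w_bound[OF that] \<open>C \<ge> 0\<close> mult_left_mono[of "r / (1 + r\<^sup>2)" 1 "C / k\<^sup>2"] by simp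
      moreover have "0 \<le> C / k\<^sup>2" "0 \<le> K / k" using \<open>C \<ge> 0\<close> \<open>K \<ge> 0\<close> \<open>k > 0\<close> by simp_all
      ultimately show "\<bar>v r\<bar> \<le> C / k\<^sup>2 + 6 * K / k + (3 * C / k\<^sup>2 + 2 * C / k + 6 * K)"
        "\<bar>v' r\<bar> \<le> C / k\<^sup>2 + 6 * K / k + (3 * C / k\<^sup>2 + 2 * C / k + 6 * K)"
        using u_bound[OF that] w'_bound[OF that] \<open>C \<ge> 0\<close> \<open>K \<ge> 0\<close> \<open>k > 0\<close>
        unfolding v_def v'_def by (auto intro!: abs_triangle_ineq[THEN order_trans])
    qed
    moreover have "\<bar>r * \<eta> r - lam * v r\<bar> \<le> K + (4 * C / k\<^sup>2 + 12 * C / k + 2 * C) + lam * (6 * K / k)"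
      if "r > 0" for r
    proof -
      have "r * \<eta> r - lam * v r = (r * \<eta> r - (w'' r + k\<^sup>2 * w r)) + w'' r - lam * u r"
        by (simp add: v_def \<open>k\<^sup>2 = lam\<close> algebra_simps)
      moreover have "K / (1 + r\<^sup>2) \<le> K / 1" using \<open>K \<ge> 0\<close> by (intro divide_left_mono) auto
      moreover have "\<bar>lam * u r\<bar> \<le> lam * (6 * K / k)"
        using u_bound(1)[of r] that \<open>lam > 0\<close> unfolding abs_mult by (intro mult_mono) auto
      ultimately show ?thesis
        using g_bound[OF less_imp_le[OF that]] w''_bound[OF less_imp_le[OF that]] by simp
    qed
    ultimately show ?thesis
      using holder_norm_div_id_finite[OF \<open>0 < \<alpha>\<close> \<open>\<alpha> \<le> 1\<close> _ _ _ dv dv'] unfolding h_def by blast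
  qed
  moreover have "\<bar>- c * sin \<zeta> / k\<bar> \<le> 2 * C / lam + 8 * K / sqrt lam"
  proof -
    have "\<bar>- c * sin \<zeta> / k\<bar> \<le> \<bar>c\<bar> / k"
      using \<open>k > 0\<close> by (simp add: abs_mult abs_divide divide_right_mono mult_right_le_one_le)
    also have "\<dots> \<le> 8 * K / k" using \<open>\<bar>c\<bar> \<le> 2 * K\<close> \<open>K \<ge> 0\<close> \<open>k > 0\<close> by (simp add: divide_right_mono)
    moreover have "0 \<le> 2 * C / lam" using \<open>C \<ge> 0\<close> \<open>lam > 0\<close> by simp
    ultimately show ?thesis by (simp add: k_def)
  qed
  moreover have "\<bar>h r - (- c * sin \<zeta> / k) * sin (sqrt lam * r - \<zeta>) / r\<bar>
      \<le> (2 * C / lam + 8 * K / sqrt lam) * (1 + r) powr (-2)" if "r > 1" for r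
  proof -
    have "r > 0" using that by simp
    then show ?thesis
      using sine_mode_remainder_bound[OF \<open>k > 0\<close> \<open>cos \<zeta> = 0\<close> \<open>K \<ge> 0\<close> that
          w_bound[OF less_imp_le[OF \<open>r > 0\<close>]] u_tail[OF \<open>r > 0\<close>]]
      by (simp add: h_def v_def k_def \<open>k\<^sup>2 = lam\<close>[unfolded k_def])
  qed
  ultimately show ?thesis
    by (intro exI[of _ h] exI[of _ "- c * sin \<zeta> / k"]
        exI[of _ "\<lambda>r. h r - (- c * sin \<zeta> / k) * sin (sqrt lam * r - \<zeta>) / r"]) auto
qed

theorem lemma5:
  fixes lam \<zeta> C :: real and J N \<rho> :: "real \<Rightarrow> real"
  assumes lam_pos: "lam > 0"
    and J_sol: "solves_radial lam (\<lambda>_. 0) J"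
    and N_sol: "solves_radial lam (\<lambda>_. 0) N"
    and J_regular: "\<exists>L. (J \<longlongrightarrow> L) (at_right 0)"
    and N_singular: "\<not> (\<exists>L. (N \<longlongrightarrow> L) (at_right 0))"
    and J_asym: "(\<lambda>r. J r - cos (sqrt lam * r - \<zeta>) / r) \<in> O[at_top](\<lambda>r. 1 / r ^ 2)"
    and N_asym: "(\<lambda>r. N r - sin (sqrt lam * r - \<zeta>) / r) \<in> O[at_top](\<lambda>r. 1 / r ^ 2)"
    and \<rho>_smooth: "\<forall>n x. (deriv ^^ n) \<rho> differentiable (at x)"
    and \<rho>_one: "\<forall>r>2. \<rho> r = 1"
    and \<rho>_zero: "\<forall>r<1. \<rho> r = 0"
  shows "\<exists>C'. \<forall>\<alpha> k1 k2 k3 \<eta>bar.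
      0 < \<alpha> \<and> \<alpha> < 1 \<and>
      holder_norm \<alpha> {0..} (\<lambda>r. \<eta>bar r * (1 + r) ^ 3) + ereal (\<bar>k1\<bar> + \<bar>k2\<bar> + \<bar>k3\<bar>) < ereal C
      \<longrightarrow>
      (let \<eta> = (\<lambda>r. \<rho> r * inverse (r ^ 2) *
                  (k1 * (sin (sqrt lam * r - \<zeta>))^2 + k2 * (cos (sqrt lam * r - \<zeta>))^2
                   + k3 * sin (sqrt lam * r - \<zeta>) * cos (sqrt lam * r - \<zeta>)) + \<eta>bar r)
       in \<exists>h c1 hbar.
            solves_radial lam \<eta> h \<and>
            holder_norm \<alpha> {0..} h < \<infinity> \<and>
            (\<forall>r>1. h r = c1 * sin (sqrt lam * r - \<zeta>) / r + hbar r) \<and>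
            \<bar>c1\<bar> \<le> C' \<and>
            (\<forall>r>1. \<bar>hbar r\<bar> \<le> C' * (1 + r) powr (-2)))"
proof -
  \<comment> \<open>Only the regular solution matters: it forces \<open>cos \<zeta> = 0\<close>.\<close>
  have "cos \<zeta> = 0" by (rule radial_regular_phase[OF lam_pos J_sol J_regular J_asym])
  have \<rho>_cont: "continuous_on UNIV \<rho>"
    using \<rho>_smooth[rule_format, of 0]
    by (auto intro!: continuous_at_imp_continuous_on differentiable_imp_continuous_within)
  obtain M where M: "\<And>r. 1 \<le> r \<Longrightarrow> r \<le> 2 \<Longrightarrow> \<bar>\<rho> r\<bar> \<le> M"
    using compact_imp_bounded[OF compact_continuous_image[OF continuous_on_subset[OF \<rho>_cont]]]
    unfolding bounded_iff by (metis atLeastAtMost_iff compact_Icc image_eqI real_norm_def subset_UNIV)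
  show ?thesis
    unfolding Let_def
    apply (intro exI[of _ "2 * C / lam + 8 * (C + 5 * (M + 1) * C + 12 * C / sqrt lam + 4 * C / lam) / sqrt lam"]
        allI impI, elim conjE)
    subgoal premises H for \<alpha> k1 k2 k3 \<eta>bar
      using weighted_holder_bounds[OF H(1) _ H(3)] H(1,2)
      by (intro radial_solution_construction[OF lam_pos \<open>cos \<zeta> = 0\<close> _ _ _ \<rho>_cont \<rho>_one \<rho>_zero M]) auto
    done
qed

end
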